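(* Let $\mathbb{I}=\{\mathbb{I}_1,\dots,\mathbb{I}_N\}$ be a random iterated function system on a compact metric space $(K,d)$ (see context), and write $h=\inf_{u\in\Omega}\dim_{\mathrm H}F_u$. Assume that $\mathbb{I}$ satisfies the $\mathcal{H}^h$-measure separated condition and that there exists $v=(v_1,v_2,\dots)\in\Omega$ such that $\lim_{l\to\infty}\sum_{j_1\in\mathcal{I}_{v_1},\dots,j_l\in\mathcal{I}_{v_l}}\mathrm{Lip}^-(S_{v_1,j_1}\circ\cdots\circ S_{v_l,j_l})^h=\infty.$ Then: (1) if $\inf_{u\in\Omega}\mathcal{H}^h(F_u)=0$, then for a typical $\omega\in\Omega$, $\mathcal{H}^h(F_\omega)=0$; (2) if $\inf_{u\in\Omega}\mathcal{H}^h(F_u)>0$, then for a typical $\omega\in\Omega$, $\mathcal{H}^h(F_\omega)=\infty$.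
   Context: A random iterated function system on a compact metric space $(K,d)$ is a finite set $\mathbb{I}=\{\mathbb{I}_1,\dots,\mathbb{I}_N\}$ with $\mathbb{I}_i=\{S_{i,j}\}_{j\in\mathcal{I}_i}$, $\mathcal{I}_i$ finite nonempty, each $S_{i,j}:K\to K$ a bi-Lipschitz contraction: $0<\mathrm{Lip}^-(S_{i,j})\le\mathrm{Lip}^+(S_{i,j})<1$ where $\mathrm{Lip}^-(\phi)=\inf_{x\ne y}d(\phi x,\phi y)/d(x,y)$, $\mathrm{Lip}^+(\phi)=\sup_{x\ne y}d(\phi x,\phi y)/d(x,y)$. $\Omega=\{1,\dots,N\}^{\mathbb{N}}$ and for $\omega\in\Omega$, $F_\omega=\bigcap_k\bigcup_{i_1\in\mathcal{I}_{\omega_1},\dots,i_k\in\mathcal{I}_{\omega_k}}S_{\omega_1,i_1}\circ\cdots\circ S_{\omega_k,i_k}(K)$. $\Omega$ has the metric $d_\Omega(u,v)=2^{-\min\{n:u_n\ne v_n\}}$; "typical $\omega$" means the set of such $\omega$ is residual (complement is a countable union of nowhere dense sets) in $(\Omega,d_\Omega)$. $\mathcal{H}^s$ denotes $s$-dimensional Hausdorff measure and $\dim_{\mathrm H}$ Hausdorff dimension. For a Borel measure $\mu$ on $K$, $\mathbb{I}$ satisfies the $\mu$-measure separated condition if for all $\omega\in\Omega$, $l\in\{1,\dots,N\}$ and $i\ne j$ in $\mathcal{I}_l$, $\mu(S_{l,i}(F_\omega)\cap S_{l,j}(F_\omega))=0$. *)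

theory Defs
  imports "HOL-Analysis.Analysis"
begin

text \<open>Contribution of a covering set U to the s-dimensional sum: diam(U)^s,
  with the usual conventions: the empty set contributes 0, and for s = 0 every
  nonempty set contributes 1 (so that H^0 is counting measure).\<close>
definition hterm :: "real \<Rightarrow> 'a::metric_space set \<Rightarrow> ennreal" where
  "hterm s U = (if U = {} then 0 else if s = 0 then 1 else ennreal (diameter U powr s))"

definition hausdorff_pre :: "real \<Rightarrow> real \<Rightarrow> 'a::metric_space set \<Rightarrow> ennreal" where
  "hausdorff_pre s \<delta> A =
     (INF U \<in> {U :: nat \<Rightarrow> 'a set. A \<subseteq> (\<Union>i. U i) \<and> (\<forall>i. bounded (U i) \<and> diameter (U i) \<le> \<delta>)}.
        (\<Sum>i. hterm s (U i)))"

definition hausdorff_measure :: "real \<Rightarrow> 'a::metric_space set \<Rightarrow> ennreal" where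
  "hausdorff_measure s A = (SUP \<delta> \<in> {0<..}. hausdorff_pre s \<delta> A)"

definition hausdorff_dim :: "'a::metric_space set \<Rightarrow> ereal" where
  "hausdorff_dim A = Inf {ereal s | s. s \<ge> 0 \<and> hausdorff_measure s A = 0}"

definition lip_lower :: "'a::metric_space set \<Rightarrow> ('a \<Rightarrow> 'a) \<Rightarrow> real" where
  "lip_lower K f = Inf {dist (f x) (f y) / dist x y | x y. x \<in> K \<and> y \<in> K \<and> x \<noteq> y}"

definition lip_upper :: "'a::metric_space set \<Rightarrow> ('a \<Rightarrow> 'a) \<Rightarrow> ereal" where
  "lip_upper K f = Sup {ereal (dist (f x) (f y) / dist x y) | x y. x \<in> K \<and> y \<in> K \<and> x \<noteq> y}"

text \<open>Sequences are indexed from 0: position n here is position n+1 in the paper.\<close>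
definition omega_space :: "nat \<Rightarrow> (nat \<Rightarrow> nat) set" where
  "omega_space N = {\<omega>. \<forall>n. \<omega> n \<in> {1..N}}"

definition omega_dist :: "(nat \<Rightarrow> nat) \<Rightarrow> (nat \<Rightarrow> nat) \<Rightarrow> real" where
  "omega_dist u v = (if u = v then 0 else (1/2) ^ Suc (LEAST n. u n \<noteq> v n))"

definition omega_top :: "nat \<Rightarrow> (nat \<Rightarrow> nat) topology" where
  "omega_top N = Metric_space.mtopology (omega_space N) omega_dist"

fun wcomp :: "(nat \<Rightarrow> nat \<Rightarrow> 'a \<Rightarrow> 'a) \<Rightarrow> (nat \<Rightarrow> nat) \<Rightarrow> (nat \<Rightarrow> nat) \<Rightarrow> nat \<Rightarrow> 'a \<Rightarrow> 'a" where
  "wcomp S \<omega> j 0 = id"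
| "wcomp S \<omega> j (Suc k) = wcomp S \<omega> j k \<circ> S (\<omega> k) (j k)"

definition words :: "(nat \<Rightarrow> nat set) \<Rightarrow> (nat \<Rightarrow> nat) \<Rightarrow> nat \<Rightarrow> (nat \<Rightarrow> nat) set" where
  "words I \<omega> k = Pi\<^sub>E {..<k} (\<lambda>i. I (\<omega> i))"

definition rattractor :: "'a set \<Rightarrow> (nat \<Rightarrow> nat set) \<Rightarrow> (nat \<Rightarrow> nat \<Rightarrow> 'a \<Rightarrow> 'a) \<Rightarrow> (nat \<Rightarrow> nat) \<Rightarrow> 'a set" where
  "rattractor K I S \<omega> = (\<Inter>k. \<Union>j \<in> words I \<omega> k. wcomp S \<omega> j k ` K)"

definition nowhere_dense :: "'a topology \<Rightarrow> 'a set \<Rightarrow> bool" where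
  "nowhere_dense X A \<longleftrightarrow> A \<subseteq> topspace X \<and> X interior_of (X closure_of A) = {}"

definition residual :: "'a topology \<Rightarrow> 'a set \<Rightarrow> bool" where
  "residual X A \<longleftrightarrow> A \<subseteq> topspace X \<and>
     (\<exists>B :: nat \<Rightarrow> 'a set. (\<forall>n. nowhere_dense X (B n)) \<and> topspace X - A \<subseteq> (\<Union>n. B n))"

end

theory Submission
  imports Defs
begin

text \<open>
  Write W_n(\<omega>) for the words of length n along \<omega> and \<sigma> for the shift. The attractor F_\<omega> is
  the union of the images of F_{\<sigma>^n \<omega>} under the compositions indexed by W_n(\<omega>). These maps
  are nonexpanding, so H^h(F_\<omega>) \<le> #W_n(\<omega>) H^h(F_{\<sigma>^n \<omega>}); if the pieces are H^h-almost
  disjoint (which follows from the measure separated condition by cancelling a common prefix),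
  then H^h(F_\<omega>) \<ge> \<Sigma> Lip^-(S_j)^h H^h(F_{\<sigma>^n \<omega>}).

  Both statements are Baire-category arguments on \<Omega>, where every cylinder must be shown to
  contain a subcylinder avoiding an exceptional set. For (1), extend a given prefix by a
  sequence u with H^h(F_u) tiny: the resulting attractor has tiny premeasure at a fixed scale,
  witnessed by an open cover, and the attractors of all sequences in a deep enough cylinder lie
  in that open set. For (2), extend the prefix by the first l letters of v: the second inequality,
  applied twice, bounds H^h of the attractors of the whole subcylinder from below by a positive
  multiple of the l-th sum in the hypothesis, which tends to infinity.
\<close>

section \<open>Hausdorff premeasure and measure\<close>

lemma hausdorff_pre_le_cover:
  assumes "A \<subseteq> (\<Union>i. U i)" "\<And>i. bounded (U i)" "\<And>i. diameter (U i) \<le> \<delta>"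
  shows "hausdorff_pre s \<delta> A \<le> (\<Sum>i. hterm s (U i))"
  unfolding hausdorff_pre_def by (rule INF_lower) (use assms in auto)

lemma hausdorff_pre_less_cover:
  assumes "hausdorff_pre s \<delta> A < t"
  obtains U where "A \<subseteq> (\<Union>i. U i)" "\<And>i. bounded (U i)" "\<And>i. diameter (U i) \<le> \<delta>"
    "(\<Sum>i. hterm s (U i)) < t"
  using assms unfolding hausdorff_pre_def INF_less_iff by blast

lemma hausdorff_pre_mono: "A \<subseteq> B \<Longrightarrow> hausdorff_pre s \<delta> A \<le> hausdorff_pre s \<delta> B"
  unfolding hausdorff_pre_def by (rule INF_superset_mono) auto

lemma hausdorff_pre_antimono: "\<delta> \<le> \<delta>' \<Longrightarrow> hausdorff_pre s \<delta>' A \<le> hausdorff_pre s \<delta> A"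
  unfolding hausdorff_pre_def by (rule INF_superset_mono) (auto intro: order_trans)

lemma hausdorff_pre_le_measure: "0 < \<delta> \<Longrightarrow> hausdorff_pre s \<delta> A \<le> hausdorff_measure s A"
  unfolding hausdorff_measure_def by (rule SUP_upper) auto

lemma hausdorff_measure_mono: "A \<subseteq> B \<Longrightarrow> hausdorff_measure s A \<le> hausdorff_measure s B"
  unfolding hausdorff_measure_def by (rule SUP_mono) (auto intro: hausdorff_pre_mono)

lemma hausdorff_measure_leI:
  "(\<And>\<delta>. 0 < \<delta> \<Longrightarrow> hausdorff_pre s \<delta> A \<le> c) \<Longrightarrow> hausdorff_measure s A \<le> c"
  unfolding hausdorff_measure_def by (rule SUP_least) auto

lemma hterm_empty [simp]: "hterm s {} = 0"
  by (simp add: hterm_def)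

lemma hterm_mono:
  assumes "V \<noteq> {} \<Longrightarrow> U \<noteq> {}" "bounded V" "diameter V \<le> diameter U" "0 \<le> s"
  shows "hterm s V \<le> hterm s U"
  using assms diameter_ge_0[OF assms(2)] by (auto simp: hterm_def intro!: powr_mono2)

lemma diameter_leI:
  fixes A :: "'a::metric_space set"
  assumes "\<And>x y. x \<in> A \<Longrightarrow> y \<in> A \<Longrightarrow> dist x y \<le> d" "0 \<le> d"
  shows "diameter A \<le> d"
  using assms unfolding diameter_def by (auto intro!: cSUP_least)

lemma suminf_interleave_le:
  fixes f g :: "nat \<Rightarrow> ennreal"
  shows "(\<Sum>i. if even i then f (i div 2) else g (i div 2)) \<le> (\<Sum>i. f i) + (\<Sum>i. g i)"
proof (rule suminf_le_const)
  define F where "F i = (if even i then f (i div 2) else g (i div 2))" for i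
  show "summable (\<lambda>i. if even i then f (i div 2) else g (i div 2))" by (rule summableI)
  fix n
  have eq: "(\<Sum>i<2*m. F i) = (\<Sum>i<m. f i) + (\<Sum>i<m. g i)" for m
  proof (induction m)
    case (Suc m)
    have "2 * Suc m = Suc (Suc (2*m))" by simp
    then show ?case using Suc by (simp add: F_def ac_simps)
  qed simp
  have "(\<Sum>i<n. F i) \<le> (\<Sum>i<2*n. F i)" by (rule sum_mono2) auto
  also have "\<dots> = (\<Sum>i<n. f i) + (\<Sum>i<n. g i)" by (rule eq)
  also have "\<dots> \<le> (\<Sum>i. f i) + (\<Sum>i. g i)"
    by (intro add_mono sum_le_suminf) (auto intro: summableI)
  finally show "(\<Sum>i<n. if even i then f (i div 2) else g (i div 2)) \<le> (\<Sum>i. f i) + (\<Sum>i. g i)"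
    by (simp add: F_def)
qed

lemma ennreal_less_add_pos: "x < top \<Longrightarrow> 0 < e \<Longrightarrow> x < x + ennreal e"
  by (cases x rule: ennreal_cases) (auto simp flip: ennreal_plus intro!: ennreal_lessI)

lemma ennreal_half_plus_half: "0 \<le> e \<Longrightarrow> ennreal (e/2) + ennreal (e/2) = ennreal e"
  by (simp flip: ennreal_plus)

lemma hausdorff_pre_Un_le:
  "hausdorff_pre s \<delta> (A \<union> B) \<le> hausdorff_pre s \<delta> A + hausdorff_pre s \<delta> B"
proof (rule ennreal_le_epsilon)
  fix e :: real
  assume fin: "hausdorff_pre s \<delta> A + hausdorff_pre s \<delta> B < top" and e: "0 < e"
  have "hausdorff_pre s \<delta> A < hausdorff_pre s \<delta> A + ennreal (e/2)"
    using fin e by (intro ennreal_less_add_pos) (auto simp: top_unique)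
  then obtain U where U: "A \<subseteq> (\<Union>i. U i)" "\<And>i. bounded (U i)" "\<And>i. diameter (U i) \<le> \<delta>"
    "(\<Sum>i. hterm s (U i)) < hausdorff_pre s \<delta> A + ennreal (e/2)"
    by (elim hausdorff_pre_less_cover) blast
  have "hausdorff_pre s \<delta> B < hausdorff_pre s \<delta> B + ennreal (e/2)"
    using fin e by (intro ennreal_less_add_pos) (auto simp: top_unique)
  then obtain V where V: "B \<subseteq> (\<Union>i. V i)" "\<And>i. bounded (V i)" "\<And>i. diameter (V i) \<le> \<delta>"
    "(\<Sum>i. hterm s (V i)) < hausdorff_pre s \<delta> B + ennreal (e/2)"
    by (elim hausdorff_pre_less_cover) blast
  define W where "W i = (if even i then U (i div 2) else V (i div 2))" for i
  have "A \<union> B \<subseteq> (\<Union>i. W i)"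
  proof
    fix x assume "x \<in> A \<union> B"
    then consider i where "x \<in> U i" | i where "x \<in> V i" using U(1) V(1) by blast
    then show "x \<in> (\<Union>i. W i)"
    proof cases
      case (1 i)
      then have "x \<in> W (2*i)" by (simp add: W_def)
      then show ?thesis by blast
    next
      case (2 i)
      then have "x \<in> W (2*i+1)" by (simp add: W_def)
      then show ?thesis by blast
    qed
  qed
  moreover have "\<And>i. bounded (W i)" "\<And>i. diameter (W i) \<le> \<delta>"
    using U V by (auto simp: W_def)
  ultimately have "hausdorff_pre s \<delta> (A \<union> B) \<le> (\<Sum>i. hterm s (W i))"
    by (rule hausdorff_pre_le_cover)
  also have "\<dots> = (\<Sum>i. if even i then hterm s (U (i div 2)) else hterm s (V (i div 2)))"
    by (simp add: W_def if_distrib)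
  also have "\<dots> \<le> (\<Sum>i. hterm s (U i)) + (\<Sum>i. hterm s (V i))"
    by (rule suminf_interleave_le)
  also have "\<dots> \<le> (hausdorff_pre s \<delta> A + ennreal (e/2)) + (hausdorff_pre s \<delta> B + ennreal (e/2))"
    using U(4) V(4) by (intro add_mono) auto
  also have "\<dots> = hausdorff_pre s \<delta> A + hausdorff_pre s \<delta> B + (ennreal (e/2) + ennreal (e/2))"
    by (simp add: ac_simps)
  also have "\<dots> = hausdorff_pre s \<delta> A + hausdorff_pre s \<delta> B + ennreal e"
    using e by (simp add: ennreal_half_plus_half)
  finally show "hausdorff_pre s \<delta> (A \<union> B) \<le> hausdorff_pre s \<delta> A + hausdorff_pre s \<delta> B + ennreal e" .
qed

lemma hausdorff_measure_Un_le:
  "hausdorff_measure s (A \<union> B) \<le> hausdorff_measure s A + hausdorff_measure s B"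
proof (rule hausdorff_measure_leI)
  fix \<delta> :: real assume "0 < \<delta>"
  have "hausdorff_pre s \<delta> (A \<union> B) \<le> hausdorff_pre s \<delta> A + hausdorff_pre s \<delta> B"
    by (rule hausdorff_pre_Un_le)
  also have "\<dots> \<le> hausdorff_measure s A + hausdorff_measure s B"
    using \<open>0 < \<delta>\<close> by (intro add_mono hausdorff_pre_le_measure)
  finally show "hausdorff_pre s \<delta> (A \<union> B) \<le> hausdorff_measure s A + hausdorff_measure s B" .
qed

lemma hausdorff_measure_UN_le:
  assumes "finite J"
  shows "hausdorff_measure s (\<Union>j\<in>J. A j) \<le> (\<Sum>j\<in>J. hausdorff_measure s (A j))"
  using assms
proof (induction J rule: finite_induct)
  case empty
  have "hausdorff_pre s \<delta> {} \<le> 0" if "0 < \<delta>" for \<delta>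
    using hausdorff_pre_le_cover[of "{}" "\<lambda>i. {}" \<delta> s] that by simp
  then have "hausdorff_measure s {} \<le> 0" by (rule hausdorff_measure_leI)
  then show ?case by simp
next
  case (insert x F)
  have "hausdorff_measure s (\<Union>j\<in>insert x F. A j) \<le> hausdorff_measure s (A x) + hausdorff_measure s (\<Union>j\<in>F. A j)"
    using hausdorff_measure_Un_le by simp
  also have "\<dots> \<le> hausdorff_measure s (A x) + (\<Sum>j\<in>F. hausdorff_measure s (A j))"
    using insert by (intro add_mono) auto
  finally show ?case using insert by simp
qed

lemma hausdorff_pre_Un_separated:
  assumes "0 \<le> \<delta>" "\<delta> < d" "\<And>x y. x \<in> X \<Longrightarrow> y \<in> Y \<Longrightarrow> d \<le> dist x y"
  shows "hausdorff_pre s \<delta> X + hausdorff_pre s \<delta> Y \<le> hausdorff_pre s \<delta> (X \<union> Y)"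
  unfolding hausdorff_pre_def [of s \<delta> "X \<union> Y"]
proof (rule INF_greatest, clarify)
  fix U :: "nat \<Rightarrow> _ set"
  assume U: "X \<union> Y \<subseteq> (\<Union>i. U i)" "\<forall>i. bounded (U i) \<and> diameter (U i) \<le> \<delta>"
  define U1 where "U1 i = (if U i \<inter> X \<noteq> {} then U i else {})" for i
  define U2 where "U2 i = (if U i \<inter> X \<noteq> {} then {} else U i)" for i
  have "hausdorff_pre s \<delta> X \<le> (\<Sum>i. hterm s (U1 i))"
  proof (rule hausdorff_pre_le_cover)
    show "X \<subseteq> (\<Union>i. U1 i)" using U(1) by (fastforce simp: U1_def)
  qed (use U assms(1) in \<open>auto simp: U1_def\<close>)
  moreover have "hausdorff_pre s \<delta> Y \<le> (\<Sum>i. hterm s (U2 i))"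
  proof (rule hausdorff_pre_le_cover)
    show "Y \<subseteq> (\<Union>i. U2 i)"
    proof
      fix y assume y: "y \<in> Y"
      then obtain i where i: "y \<in> U i" using U by auto
      have "U i \<inter> X = {}"
      proof (rule ccontr)
        assume "U i \<inter> X \<noteq> {}"
        then obtain x where x: "x \<in> U i" "x \<in> X" by auto
        have "dist x y \<le> diameter (U i)" using diameter_bounded_bound U(2) x(1) i by blast
        moreover have "diameter (U i) \<le> \<delta>" using U(2) by blast
        ultimately show False using assms(2) assms(3)[OF x(2) y] by linarith
      qed
      then show "y \<in> (\<Union>i. U2 i)" using i by (auto simp: U2_def)
    qed
  qed (use U assms(1) in \<open>auto simp: U2_def\<close>)
  ultimately have "hausdorff_pre s \<delta> X + hausdorff_pre s \<delta> Y \<le> (\<Sum>i. hterm s (U1 i)) + (\<Sum>i. hterm s (U2 i))"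
    by (rule add_mono)
  also have "\<dots> = (\<Sum>i. hterm s (U1 i) + hterm s (U2 i))"
    by (rule suminf_add) (auto intro: summableI)
  also have "\<dots> = (\<Sum>i. hterm s (U i))"
    by (rule suminf_cong) (simp add: U1_def U2_def)
  finally show "hausdorff_pre s \<delta> X + hausdorff_pre s \<delta> Y \<le> (\<Sum>i. hterm s (U i))" .
qed

lemma hausdorff_measure_image_le:
  assumes "A \<subseteq> K" "\<And>x y. x \<in> K \<Longrightarrow> y \<in> K \<Longrightarrow> dist (f x) (f y) \<le> dist x y" "0 \<le> s"
  shows "hausdorff_measure s (f ` A) \<le> hausdorff_measure s A"
  unfolding hausdorff_measure_def
proof (rule SUP_mono)
  fix \<delta> :: real assume "\<delta> \<in> {0<..}"
  have "hausdorff_pre s \<delta> (f ` A) \<le> hausdorff_pre s \<delta> A"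
    unfolding hausdorff_pre_def [of s \<delta> A]
  proof (rule INF_greatest, clarify)
    fix U :: "nat \<Rightarrow> _ set"
    assume U: "A \<subseteq> (\<Union>i. U i)" "\<forall>i. bounded (U i) \<and> diameter (U i) \<le> \<delta>"
    define V where "V i = f ` (U i \<inter> A)" for i
    have dist_V: "dist x y \<le> diameter (U i)" if xy: "x \<in> V i" "y \<in> V i" for x y i
    proof -
      obtain a b where ab: "a \<in> U i \<inter> A" "b \<in> U i \<inter> A" "x = f a" "y = f b"
        using xy unfolding V_def by blast
      then have "dist x y \<le> dist a b" using assms(1,2) by blast
      also have "\<dots> \<le> diameter (U i)" using ab diameter_bounded_bound[of "U i" a b] U(2) by blast
      finally show ?thesis .
    qed
    have bounded_V: "bounded (V i)" for i
      unfolding bounded_two_points using dist_V by blast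
    have diameter_V: "diameter (V i) \<le> diameter (U i)" for i
      by (rule diameter_leI) (use dist_V diameter_ge_0[of "U i"] U(2) in auto)
    have "f ` A \<subseteq> (\<Union>i. V i)" using U(1) unfolding V_def by blast
    then have "hausdorff_pre s \<delta> (f ` A) \<le> (\<Sum>i. hterm s (V i))"
      by (rule hausdorff_pre_le_cover) (use U bounded_V diameter_V in \<open>blast intro: order_trans\<close>)+
    also have "\<dots> \<le> (\<Sum>i. hterm s (U i))"
      by (intro suminf_le hterm_mono)
        (use bounded_V diameter_V assms(3) in \<open>auto simp: V_def intro: summableI\<close>)
    finally show "hausdorff_pre s \<delta> (f ` A) \<le> (\<Sum>i. hterm s (U i))" .
  qed
  then show "\<exists>\<delta>'\<in>{0<..}. hausdorff_pre s \<delta> (f ` A) \<le> hausdorff_pre s \<delta>' A"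
    using \<open>\<delta> \<in> {0<..}\<close> by blast
qed

lemma hterm_scale_le:
  assumes "0 < L" "0 \<le> s" "bounded V" "V \<noteq> {} \<Longrightarrow> U \<noteq> {}" "L * diameter V \<le> diameter U"
  shows "ennreal (L powr s) * hterm s V \<le> hterm s U"
proof (cases "V = {} \<or> s = 0")
  case True
  then show ?thesis using assms(1,4) by (auto simp: hterm_def)
next
  case False
  have "L powr s * diameter V powr s = (L * diameter V) powr s"
    using assms(1) diameter_ge_0[OF assms(3)] by (simp add: powr_mult)
  also have "\<dots> \<le> diameter U powr s"
    using assms diameter_ge_0[OF assms(3)] by (intro powr_mono2) auto
  finally show ?thesis
    using False assms(4) by (simp add: hterm_def ennreal_mult[symmetric] ennreal_leI)
qed

lemma hausdorff_pre_image_ge: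
  assumes L: "0 < L" and s: "0 \<le> s" and "A \<subseteq> K"
    and expand: "\<And>x y. x \<in> K \<Longrightarrow> y \<in> K \<Longrightarrow> L * dist x y \<le> dist (f x) (f y)"
  shows "ennreal (L powr s) * hausdorff_pre s (\<delta> / L) A \<le> hausdorff_pre s \<delta> (f ` A)"
  unfolding hausdorff_pre_def[of s \<delta> "f ` A"]
proof (rule INF_greatest, clarify)
  fix U :: "nat \<Rightarrow> _ set"
  assume U: "f ` A \<subseteq> (\<Union>i. U i)" "\<forall>i. bounded (U i) \<and> diameter (U i) \<le> \<delta>"
  define V where "V i = {x\<in>A. f x \<in> U i}" for i
  have dist_V: "L * dist x y \<le> diameter (U i)" if xy: "x \<in> V i" "y \<in> V i" for x y i
  proof -
    have "x \<in> K" "y \<in> K" "f x \<in> U i" "f y \<in> U i" using xy \<open>A \<subseteq> K\<close> by (auto simp: V_def)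
    then show ?thesis
      using expand[of x y] diameter_bounded_bound[of "U i" "f x" "f y"] U(2) by fastforce
  qed
  have bounded_V: "bounded (V i)" for i
  proof -
    have "dist x y \<le> diameter (U i) / L" if "x \<in> V i" "y \<in> V i" for x y
      using dist_V[OF that] L by (simp add: field_simps)
    then show ?thesis unfolding bounded_two_points by blast
  qed
  have diameter_V: "L * diameter (V i) \<le> diameter (U i)" for i
  proof -
    have "diameter (V i) \<le> diameter (U i) / L"
      by (rule diameter_leI) (use dist_V L diameter_ge_0[of "U i"] U(2) in \<open>auto simp: field_simps\<close>)
    then show ?thesis using L by (simp add: field_simps)
  qed
  have "diameter (V i) \<le> \<delta> / L" for i
    using diameter_V[of i] U(2) L by (simp add: field_simps) (meson order_trans)
  then have "hausdorff_pre s (\<delta>/L) A \<le> (\<Sum>i. hterm s (V i))"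
    by (intro hausdorff_pre_le_cover bounded_V) (use U(1) in \<open>auto simp: V_def\<close>)
  then have "ennreal (L powr s) * hausdorff_pre s (\<delta>/L) A \<le> (\<Sum>i. ennreal (L powr s) * hterm s (V i))"
    by (simp add: mult_left_mono)
  also have "\<dots> \<le> (\<Sum>i. hterm s (U i))"
    by (intro suminf_le hterm_scale_le L s bounded_V diameter_V summableI) (auto simp: V_def)
  finally show "ennreal (L powr s) * hausdorff_pre s (\<delta>/L) A \<le> (\<Sum>i. hterm s (U i))" .
qed

lemma hausdorff_measure_image_ge:
  assumes L: "0 < L" and s: "0 \<le> s" and "A \<subseteq> K"
    and expand: "\<And>x y. x \<in> K \<Longrightarrow> y \<in> K \<Longrightarrow> L * dist x y \<le> dist (f x) (f y)"
  shows "ennreal (L powr s) * hausdorff_measure s A \<le> hausdorff_measure s (f ` A)"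
proof -
  have "ennreal (L powr s) * hausdorff_measure s A = (SUP \<delta>\<in>{0<..}. ennreal (L powr s) * hausdorff_pre s \<delta> A)"
    unfolding hausdorff_measure_def by (rule SUP_mult_left_ennreal)
  also have "\<dots> \<le> hausdorff_measure s (f ` A)"
  proof (rule SUP_least)
    fix \<delta> :: real assume "\<delta> \<in> {0<..}"
    have "ennreal (L powr s) * hausdorff_pre s ((\<delta>*L)/L) A \<le> hausdorff_pre s (\<delta>*L) (f ` A)"
      by (rule hausdorff_pre_image_ge[OF assms])
    also have "\<dots> \<le> hausdorff_measure s (f ` A)"
      using \<open>\<delta> \<in> {0<..}\<close> L by (intro hausdorff_pre_le_measure) simp
    finally show "ennreal (L powr s) * hausdorff_pre s \<delta> A \<le> hausdorff_measure s (f ` A)"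
      using L by simp
  qed
  finally show ?thesis .
qed

lemma exists_powr_increment_le:
  fixes d s r b :: real
  assumes "0 \<le> d" "0 < s" "0 < r" "0 < b"
  obtains \<eta> where "0 < \<eta>" "\<eta> \<le> b" "(d + \<eta>) powr s \<le> d powr s + r"
proof -
  have "((\<lambda>t. (d + t) powr s) \<longlongrightarrow> (d + 0) powr s) (at_right 0)"
    using assms by (intro tendsto_powr2 tendsto_intros)
      (auto simp: eventually_at_right_field intro: exI[of _ 1])
  then have "eventually (\<lambda>t. dist ((d + t) powr s) (d powr s) < r) (at_right 0)"
    using assms(3) by (auto dest: tendstoD)
  then obtain c where c: "c > 0" "\<And>t. t > 0 \<Longrightarrow> t < c \<Longrightarrow> dist ((d + t) powr s) (d powr s) < r"
    unfolding eventually_at_right_field by auto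
  define \<eta> where "\<eta> = min (c/2) b"
  have "0 < \<eta>" "\<eta> \<le> b" "\<eta> < c" using c assms by (auto simp: \<eta>_def)
  moreover have "(d + \<eta>) powr s \<le> d powr s + r"
    using c(2)[OF \<open>0 < \<eta>\<close> \<open>\<eta> < c\<close>] by (auto simp: dist_real_def)
  ultimately show ?thesis using that by blast
qed

lemma open_enlargement:
  fixes U :: "'a::metric_space set"
  assumes U: "bounded U" and b: "0 < b" and r: "0 < r" and s: "0 \<le> s"
  obtains W where "open W" "U \<subseteq> W" "bounded W" "diameter W \<le> diameter U + b"
    "hterm s W \<le> hterm s U + ennreal r"
proof -
  obtain \<eta> where \<eta>: "0 < \<eta>" "\<eta> \<le> b" "s > 0 \<Longrightarrow> (diameter U + \<eta>) powr s \<le> diameter U powr s + r"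
  proof (cases "s > 0")
    case True
    obtain \<eta> where "0 < \<eta>" "\<eta> \<le> b" "(diameter U + \<eta>) powr s \<le> diameter U powr s + r"
      using exists_powr_increment_le[OF diameter_ge_0[OF U] True r b] .
    then show ?thesis using that by blast
  qed (use that[of b] b in auto)
  define W where "W = (\<Union>a\<in>U. ball a (\<eta>/2))"
  have dist_W: "dist x y \<le> diameter U + \<eta>" if xy: "x \<in> W" "y \<in> W" for x y
  proof -
    obtain a b where ab: "a \<in> U" "dist a x < \<eta>/2" "b \<in> U" "dist b y < \<eta>/2"
      using xy unfolding W_def UN_iff mem_ball by blast
    have "dist x y \<le> dist a x + dist a b + dist b y"
      using dist_triangle[of x y a] dist_triangle[of a y b] by (simp add: dist_commute)
    then show ?thesis using ab diameter_bounded_bound[OF U ab(1,3)] by linarith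
  qed
  have bounded_W: "bounded W" unfolding bounded_two_points using dist_W by blast
  have diameter_W: "diameter W \<le> diameter U + \<eta>"
    by (rule diameter_leI[OF dist_W]) (use diameter_ge_0[OF U] \<eta>(1) in auto)
  have "hterm s W \<le> hterm s U + ennreal r"
  proof (cases "U = {}")
    case True
    then show ?thesis by (simp add: W_def)
  next
    case False
    then have "W \<noteq> {}" using \<eta>(1) by (auto simp: W_def)
    show ?thesis
    proof (cases "s = 0")
      case True
      then show ?thesis using False \<open>W \<noteq> {}\<close> by (simp add: hterm_def)
    next
      case s_pos: False
      have "diameter W powr s \<le> (diameter U + \<eta>) powr s"
        using diameter_W diameter_ge_0[OF bounded_W] s by (intro powr_mono2) auto
      also have "\<dots> \<le> diameter U powr s + r" using \<eta>(3) s s_pos by simp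
      finally have "ennreal (diameter W powr s) \<le> ennreal (diameter U powr s + r)"
        by (rule ennreal_leI)
      also have "\<dots> = ennreal (diameter U powr s) + ennreal r"
        using r by (intro ennreal_plus) auto
      finally show ?thesis using False \<open>W \<noteq> {}\<close> s_pos by (simp add: hterm_def)
    qed
  qed
  moreover have "open W" "U \<subseteq> W" using \<eta>(1) by (auto simp: W_def)
  moreover have "diameter W \<le> diameter U + b" using diameter_W \<eta>(2) by linarith
  ultimately show ?thesis using that bounded_W by blast
qed

lemma ennreal_exists_add_less:
  fixes x t :: ennreal
  assumes "x < t"
  obtains e where "0 < e" "x + ennreal e < t"
proof -
  obtain y where y: "x < y" "y < t" using dense[OF assms] by blast
  have "x < top" "y < top" using y order_less_le_trans[OF _ top_greatest] by blast+
  then obtain a b where ab: "x = ennreal a" "0 \<le> a" "y = ennreal b" "0 \<le> b"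
    by (metis ennreal_cases less_irrefl)
  then have "a < b" using y(1) by (simp add: ennreal_less_iff)
  then have "x + ennreal (b - a) = y" using ab by (simp flip: ennreal_plus)
  then show ?thesis using that[of "b - a"] \<open>a < b\<close> y(2) by simp
qed

lemma hausdorff_pre_open_superset:
  assumes A: "hausdorff_pre s \<delta> A < t" and e: "0 < e" and s: "0 \<le> s"
  obtains G where "open G" "A \<subseteq> G" "hausdorff_pre s (\<delta> + e) G < t"
proof -
  obtain U where U: "A \<subseteq> (\<Union>i. U i)" "\<And>i. bounded (U i)" "\<And>i. diameter (U i) \<le> \<delta>"
    "(\<Sum>i. hterm s (U i)) < t"
    using hausdorff_pre_less_cover[OF A] by blast
  obtain e' where e': "0 < e'" "(\<Sum>i. hterm s (U i)) + ennreal e' < t"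
    using ennreal_exists_add_less[OF U(4)] by blast
  have "\<forall>i. \<exists>W. open W \<and> U i \<subseteq> W \<and> bounded W \<and> diameter W \<le> diameter (U i) + e
      \<and> hterm s W \<le> hterm s (U i) + ennreal (e' / 2^Suc i)"
  proof
    fix i
    have "0 < e' / 2^Suc i" using e'(1) by simp
    from open_enlargement[OF U(2) e this s] show "\<exists>W. open W \<and> U i \<subseteq> W \<and> bounded W
      \<and> diameter W \<le> diameter (U i) + e \<and> hterm s W \<le> hterm s (U i) + ennreal (e' / 2^Suc i)"
      by blast
  qed
  then obtain W where W: "\<And>i. open (W i)" "\<And>i. U i \<subseteq> W i" "\<And>i. bounded (W i)"
    "\<And>i. diameter (W i) \<le> diameter (U i) + e"
    "\<And>i. hterm s (W i) \<le> hterm s (U i) + ennreal (e' / 2^Suc i)"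
    by metis
  have geometric: "(\<lambda>i. e' / 2^Suc i) sums e'"
    using sums_mult[OF power_half_series, of e'] by (simp add: power_one_over)
  have tail: "(\<Sum>i. ennreal (e' / 2^Suc i)) = ennreal e'"
    by (rule suminf_ennreal_eq[OF _ geometric]) (use e'(1) in auto)
  have "diameter (W i) \<le> \<delta> + e" for i using W(4)[of i] U(3)[of i] by linarith
  then have "hausdorff_pre s (\<delta> + e) (\<Union>i. W i) \<le> (\<Sum>i. hterm s (W i))"
    using hausdorff_pre_le_cover[of "\<Union>i. W i" W] W(3) by blast
  also have "\<dots> \<le> (\<Sum>i. hterm s (U i) + ennreal (e' / 2^Suc i))"
    by (rule suminf_le[OF W(5)]) (auto intro: summableI)
  also have "\<dots> = (\<Sum>i. hterm s (U i)) + ennreal e'"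
    unfolding tail[symmetric] by (rule suminf_add[symmetric]) (auto intro: summableI)
  also have "\<dots> < t" by (rule e'(2))
  finally have "hausdorff_pre s (\<delta> + e) (\<Union>i. W i) < t" .
  moreover have "open (\<Union>i. W i)" using W(1) by blast
  moreover have "A \<subseteq> (\<Union>i. W i)" using U(1) W(2) by blast
  ultimately show ?thesis using that by blast
qed

lemma compact_closed_separated:
  fixes X Y :: "'a::metric_space set"
  assumes "compact X" "closed Y" "X \<inter> Y = {}"
  obtains d where "0 < d" "\<And>x y. x \<in> X \<Longrightarrow> y \<in> Y \<Longrightarrow> d \<le> dist x y"
proof (cases "X = {} \<or> Y = {}")
  case True
  then show ?thesis using that[of 1] by auto
next
  case False
  then have XY: "X \<noteq> {}" "Y \<noteq> {}" by auto
  obtain x0 where x0: "x0 \<in> X" "\<And>x. x \<in> X \<Longrightarrow> infdist x0 Y \<le> infdist x Y"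
    using continuous_attains_inf[OF assms(1) XY(1), of "\<lambda>x. infdist x Y"]
      continuous_on_infdist[OF continuous_on_id, of X Y] by auto
  have "infdist x0 Y \<noteq> 0" using in_closed_iff_infdist_zero[OF assms(2) XY(2)] x0 assms(3) by auto
  then have "0 < infdist x0 Y" using infdist_nonneg[of x0 Y] by linarith
  moreover have "infdist x0 Y \<le> dist x y" if "x \<in> X" "y \<in> Y" for x y
    using x0(2)[OF that(1)] infdist_le[OF that(2), of x] by linarith
  ultimately show ?thesis by (rule that)
qed

text \<open>Outside a cheap open neighbourhood G of A \<inter> B, the compact sets A - G and B - G are a
  positive distance apart, so their premeasures add up.\<close>
lemma hausdorff_pre_add_compact_le:
  fixes A B :: "'a::metric_space set"
  assumes A: "compact A" and B: "compact B" and null: "hausdorff_measure s (A \<inter> B) = 0"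
    and s: "0 \<le> s" and \<delta>: "0 < \<delta>" and e: "0 < e"
  shows "hausdorff_pre s \<delta> A + hausdorff_pre s \<delta> B \<le> hausdorff_measure s (A \<union> B) + ennreal e"
proof -
  have "hausdorff_pre s (\<delta>/2) (A \<inter> B) < ennreal (e/2)"
    using hausdorff_pre_le_measure[of "\<delta>/2" s "A \<inter> B"] null \<delta> e by simp
  then obtain G where G: "open G" "A \<inter> B \<subseteq> G" "hausdorff_pre s (\<delta>/2 + \<delta>/2) G < ennreal (e/2)"
    using hausdorff_pre_open_superset[OF _ _ s, of "\<delta>/2" "A \<inter> B" "ennreal (e/2)" "\<delta>/2"] \<delta> by auto
  define X where "X = A - G"
  define Y where "Y = B - G"
  have "compact X" "compact Y" using A B G(1) by (auto simp: X_def Y_def intro: compact_diff)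
  moreover have "X \<inter> Y = {}" using G(2) by (auto simp: X_def Y_def)
  ultimately obtain d where d: "0 < d" "\<And>x y. x \<in> X \<Longrightarrow> y \<in> Y \<Longrightarrow> d \<le> dist x y"
    using compact_closed_separated[of X Y] compact_imp_closed[of Y] by blast
  define \<delta>' where "\<delta>' = min \<delta> (d/2)"
  have \<delta>': "0 < \<delta>'" "\<delta>' \<le> \<delta>" "\<delta>' < d" using \<delta> d by (auto simp: \<delta>'_def)
  have pre_G: "hausdorff_pre s \<delta> G \<le> ennreal (e/2)" using G(3) by simp
  have "hausdorff_pre s \<delta> X + hausdorff_pre s \<delta> Y \<le> hausdorff_pre s \<delta>' X + hausdorff_pre s \<delta>' Y"
    using \<delta>' by (intro add_mono hausdorff_pre_antimono)
  also have "\<dots> \<le> hausdorff_pre s \<delta>' (X \<union> Y)"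
    using \<delta>' d by (intro hausdorff_pre_Un_separated) auto
  also have "\<dots> \<le> hausdorff_measure s (X \<union> Y)"
    by (rule hausdorff_pre_le_measure[OF \<delta>'(1)])
  also have "\<dots> \<le> hausdorff_measure s (A \<union> B)"
    by (rule hausdorff_measure_mono) (auto simp: X_def Y_def)
  finally have XY_le: "hausdorff_pre s \<delta> X + hausdorff_pre s \<delta> Y \<le> hausdorff_measure s (A \<union> B)" .
  have "hausdorff_pre s \<delta> A \<le> hausdorff_pre s \<delta> (X \<union> G)"
    by (rule hausdorff_pre_mono) (auto simp: X_def)
  also have "\<dots> \<le> hausdorff_pre s \<delta> X + ennreal (e/2)"
    using hausdorff_pre_Un_le[of s \<delta> X G] add_left_mono[OF pre_G] by (rule order_trans)
  finally have A_le: "hausdorff_pre s \<delta> A \<le> hausdorff_pre s \<delta> X + ennreal (e/2)" .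
  have "hausdorff_pre s \<delta> B \<le> hausdorff_pre s \<delta> (Y \<union> G)"
    by (rule hausdorff_pre_mono) (auto simp: Y_def)
  also have "\<dots> \<le> hausdorff_pre s \<delta> Y + ennreal (e/2)"
    using hausdorff_pre_Un_le[of s \<delta> Y G] add_left_mono[OF pre_G] by (rule order_trans)
  finally have B_le: "hausdorff_pre s \<delta> B \<le> hausdorff_pre s \<delta> Y + ennreal (e/2)" .
  have "hausdorff_pre s \<delta> A + hausdorff_pre s \<delta> B
      \<le> (hausdorff_pre s \<delta> X + ennreal (e/2)) + (hausdorff_pre s \<delta> Y + ennreal (e/2))"
    using A_le B_le by (rule add_mono)
  also have "\<dots> = (hausdorff_pre s \<delta> X + hausdorff_pre s \<delta> Y) + (ennreal (e/2) + ennreal (e/2))"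
    by (simp add: ac_simps)
  also have "\<dots> = (hausdorff_pre s \<delta> X + hausdorff_pre s \<delta> Y) + ennreal e"
    using e by (simp add: ennreal_half_plus_half)
  also have "\<dots> \<le> hausdorff_measure s (A \<union> B) + ennreal e"
    using XY_le by (rule add_right_mono)
  finally show ?thesis .
qed

lemma hausdorff_measure_Un_compact_ge:
  fixes A B :: "'a::metric_space set"
  assumes A: "compact A" and B: "compact B" and null: "hausdorff_measure s (A \<inter> B) = 0"
    and s: "0 \<le> s"
  shows "hausdorff_measure s A + hausdorff_measure s B \<le> hausdorff_measure s (A \<union> B)"
proof (rule ennreal_le_epsilon)
  fix e :: real assume e: "0 < e"
  have ne: "{0::real<..} \<noteq> {}" by auto
  show "hausdorff_measure s A + hausdorff_measure s B \<le> hausdorff_measure s (A \<union> B) + ennreal e"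
    unfolding hausdorff_measure_def[of s A] hausdorff_measure_def[of s B]
  proof (subst ennreal_SUP_add_left[OF ne, symmetric], rule SUP_least)
    fix \<delta>1 :: real assume "\<delta>1 \<in> {0<..}"
    show "hausdorff_pre s \<delta>1 A + (SUP \<delta>\<in>{0<..}. hausdorff_pre s \<delta> B) \<le> hausdorff_measure s (A \<union> B) + ennreal e"
    proof (subst ennreal_SUP_add_right[OF ne], rule SUP_least)
      fix \<delta>2 :: real assume "\<delta>2 \<in> {0<..}"
      have "hausdorff_pre s \<delta>1 A + hausdorff_pre s \<delta>2 B \<le>
          hausdorff_pre s (min \<delta>1 \<delta>2) A + hausdorff_pre s (min \<delta>1 \<delta>2) B"
        by (intro add_mono hausdorff_pre_antimono) auto
      also have "\<dots> \<le> hausdorff_measure s (A \<union> B) + ennreal e"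
        using \<open>\<delta>1 \<in> {0<..}\<close> \<open>\<delta>2 \<in> {0<..}\<close> by (intro hausdorff_pre_add_compact_le[OF A B null s _ e]) auto
      finally show "hausdorff_pre s \<delta>1 A + hausdorff_pre s \<delta>2 B \<le> hausdorff_measure s (A \<union> B) + ennreal e" .
    qed
  qed
qed

lemma hausdorff_measure_UN_compact_ge:
  assumes "finite J" "\<And>j. j \<in> J \<Longrightarrow> compact (A j)"
    "\<And>i j. i \<in> J \<Longrightarrow> j \<in> J \<Longrightarrow> i \<noteq> j \<Longrightarrow> hausdorff_measure s (A i \<inter> A j) = 0" "0 \<le> s"
  shows "(\<Sum>j\<in>J. hausdorff_measure s (A j)) \<le> hausdorff_measure s (\<Union>j\<in>J. A j)"
  using assms
proof (induction J rule: finite_induct)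
  case empty
  show ?case by simp
next
  case (insert x F)
  have "(\<Sum>j\<in>insert x F. hausdorff_measure s (A j))
      = hausdorff_measure s (A x) + (\<Sum>j\<in>F. hausdorff_measure s (A j))"
    using insert.hyps by (rule sum.insert)
  also have "\<dots> \<le> hausdorff_measure s (A x) + hausdorff_measure s (\<Union>j\<in>F. A j)"
    using insert.prems by (intro add_left_mono insert.IH) auto
  also have "\<dots> \<le> hausdorff_measure s (A x \<union> (\<Union>j\<in>F. A j))"
  proof (rule hausdorff_measure_Un_compact_ge)
    show "compact (A x)" by (rule insert.prems(1)) simp
    show "compact (\<Union>j\<in>F. A j)"
      by (rule compact_UN[OF insert.hyps(1)]) (simp add: insert.prems(1))
    have "A x \<inter> (\<Union>j\<in>F. A j) = (\<Union>j\<in>F. A x \<inter> A j)" by blast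
    also have "hausdorff_measure s \<dots> \<le> (\<Sum>j\<in>F. hausdorff_measure s (A x \<inter> A j))"
      by (rule hausdorff_measure_UN_le[OF insert.hyps(1)])
    also have "\<dots> = 0"
      using insert.hyps(2) by (intro sum.neutral ballI insert.prems(2)) auto
    finally show "hausdorff_measure s (A x \<inter> (\<Union>j\<in>F. A j)) = 0" by simp
  qed (rule insert.prems(3))
  finally show ?case by (simp only: UN_insert)
qed

lemma hausdorff_measure_eq_0_if_pre_eq_0:
  assumes "hausdorff_pre s \<delta> A = 0" "0 \<le> s"
  shows "hausdorff_measure s A = 0"
proof -
  \<comment> \<open>a cover of total cost below min e (\<delta>' powr s) consists of sets of diameter below \<delta>'\<close>
  have small: "hausdorff_pre s \<delta>' A \<le> ennreal e" if \<delta>': "0 < \<delta>'" and e: "0 < e" for \<delta>' e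
  proof -
    define t where "t = min e (if s > 0 then \<delta>' powr s else 1)"
    have t: "0 < t" "t \<le> e" using \<delta>' e by (auto simp: t_def)
    obtain U where U: "A \<subseteq> (\<Union>i. U i)" "\<And>i. bounded (U i)" "\<And>i. diameter (U i) \<le> \<delta>"
      "(\<Sum>i. hterm s (U i)) < ennreal t"
    proof (rule hausdorff_pre_less_cover)
      show "hausdorff_pre s \<delta> A < ennreal t" using assms(1) t(1) by simp
    qed blast
    have "diameter (U i) \<le> \<delta>'" for i
    proof (cases "U i = {}")
      case False
      have term_small: "hterm s (U i) < ennreal t" using U(4) by (rule ennreal_suminf_lessD)
      show ?thesis
      proof (cases "s > 0")
        case True
        then have "ennreal (diameter (U i) powr s) < ennreal t"
          using term_small \<open>U i \<noteq> {}\<close> by (simp add: hterm_def)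
        moreover have "t \<le> \<delta>' powr s" using True by (simp add: t_def)
        ultimately have "diameter (U i) powr s < \<delta>' powr s"
          by (simp add: ennreal_less_iff)
        then show ?thesis
          using diameter_ge_0[OF U(2)[of i]] \<delta>' True powr_less_mono2[of s \<delta>' "diameter (U i)"]
          by (cases "diameter (U i) \<le> \<delta>'") auto
      next
        case False
        then show ?thesis using term_small \<open>U i \<noteq> {}\<close> assms(2) by (simp add: hterm_def t_def)
      qed
    qed (use \<delta>' in simp)
    then have "hausdorff_pre s \<delta>' A \<le> (\<Sum>i. hterm s (U i))"
      by (rule hausdorff_pre_le_cover[OF U(1,2)])
    also have "\<dots> \<le> ennreal e" using U(4) ennreal_leI[OF t(2)] by simp
    finally show ?thesis .
  qed
  have "hausdorff_pre s \<delta>' A \<le> 0" if "0 < \<delta>'" for \<delta>'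
  proof (rule ennreal_le_epsilon)
    fix e :: real assume "0 < e"
    then show "hausdorff_pre s \<delta>' A \<le> 0 + ennreal e" using small[OF that] by simp
  qed
  then have "hausdorff_measure s A \<le> 0" by (rule hausdorff_measure_leI)
  then show ?thesis by simp
qed

lemma lip_lower_mult_dist_le:
  assumes "x \<in> K" "y \<in> K"
  shows "lip_lower K f * dist x y \<le> dist (f x) (f y)"
proof (cases "x = y")
  case False
  have "lip_lower K f \<le> dist (f x) (f y) / dist x y"
    unfolding lip_lower_def
    by (rule cInf_lower) (use assms False in \<open>auto intro!: bdd_belowI[of _ 0]\<close>)
  then show ?thesis using False by (simp add: field_simps)
qed simp

lemma lip_lower_nonneg:
  assumes "x \<in> K" "y \<in> K" "x \<noteq> y"
  shows "0 \<le> lip_lower K f"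
  unfolding lip_lower_def by (rule cInf_greatest) (use assms in auto)

lemma lip_lower_comp:
  assumes ab: "a \<in> K" "b \<in> K" "a \<noteq> b" and g: "g ` K \<subseteq> K"
  shows "lip_lower K f * lip_lower K g \<le> lip_lower K (f \<circ> g)"
  unfolding lip_lower_def[of K "f \<circ> g"]
proof (rule cInf_greatest)
  show "{dist ((f \<circ> g) x) ((f \<circ> g) y) / dist x y |x y. x \<in> K \<and> y \<in> K \<and> x \<noteq> y} \<noteq> {}"
    using ab by blast
  fix r assume "r \<in> {dist ((f \<circ> g) x) ((f \<circ> g) y) / dist x y |x y. x \<in> K \<and> y \<in> K \<and> x \<noteq> y}"
  then obtain x y where r: "r = dist (f (g x)) (f (g y)) / dist x y" "x \<in> K" "y \<in> K" "x \<noteq> y"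
    by auto
  have gK: "g x \<in> K" "g y \<in> K" using g r by auto
  have "lip_lower K f * lip_lower K g * dist x y \<le> lip_lower K f * dist (g x) (g y)"
    using lip_lower_mult_dist_le[OF r(2,3), of g] lip_lower_nonneg[OF ab]
    by (simp add: mult.assoc mult_left_mono)
  also have "\<dots> \<le> dist (f (g x)) (f (g y))" by (rule lip_lower_mult_dist_le[OF gK])
  finally show "lip_lower K f * lip_lower K g \<le> r"
    using r(1,4) by (simp add: pos_le_divide_eq)
qed

lemma lip_lower_id:
  assumes "a \<in> K" "b \<in> K" "a \<noteq> b"
  shows "lip_lower K id = 1"
proof -
  have "{dist (id x) (id y) / dist x y |x y. x \<in> K \<and> y \<in> K \<and> x \<noteq> y} = {1}"
    using assms by auto
  then show ?thesis by (simp add: lip_lower_def)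
qed

lemma dist_le_of_lip_upper_le:
  assumes "x \<in> K" "y \<in> K" "lip_upper K f \<le> ereal c"
  shows "dist (f x) (f y) \<le> c * dist x y"
proof (cases "x = y")
  case False
  have "ereal (dist (f x) (f y) / dist x y) \<le> lip_upper K f"
    unfolding lip_upper_def by (rule Sup_upper) (use assms False in auto)
  then have "dist (f x) (f y) / dist x y \<le> c" using assms(3) by (meson ereal_less_eq(3) order_trans)
  then show ?thesis using False by (simp add: field_simps)
qed simp

section \<open>The sequence space\<close>

lemma omega_dist_commute: "omega_dist u v = omega_dist v u"
proof -
  have "(LEAST n. u n \<noteq> v n) = (LEAST n. v n \<noteq> u n)" by metis
  then show ?thesis by (auto simp: omega_dist_def)
qed

lemma omega_dist_less_power_iff: "omega_dist u v < (1/2)^n \<longleftrightarrow> (\<forall>i<n. u i = v i)"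
proof (cases "u = v")
  case False
  then obtain k where "u k \<noteq> v k" by auto
  define L where "L = (LEAST n. u n \<noteq> v n)"
  have L: "u L \<noteq> v L" unfolding L_def by (rule LeastI) fact
  have below: "i < L \<Longrightarrow> u i = v i" for i unfolding L_def using not_less_Least by blast
  have "omega_dist u v < (1/2)^n \<longleftrightarrow> (1/2::real)^Suc L < (1/2)^n"
    using False by (simp add: omega_dist_def L_def)
  also have "\<dots> \<longleftrightarrow> n \<le> L" by (subst power_strict_decreasing_iff) auto
  also have "\<dots> \<longleftrightarrow> (\<forall>i<n. u i = v i)"
  proof
    assume "n \<le> L" then show "\<forall>i<n. u i = v i" using below by auto
  next
    assume "\<forall>i<n. u i = v i" then show "n \<le> L" using L by (meson not_le)
  qed
  finally show ?thesis .
qed (simp add: omega_dist_def)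

lemma omega_dist_triangle: "omega_dist u w \<le> omega_dist u v + omega_dist v w"
proof (rule ccontr)
  assume contr: "\<not> ?thesis"
  then have "u \<noteq> w" by (auto simp: omega_dist_def)
  then obtain k where "u k \<noteq> w k" by auto
  define L where "L = (LEAST n. u n \<noteq> w n)"
  have L: "u L \<noteq> w L" unfolding L_def by (rule LeastI) fact
  have "omega_dist u w = (1/2)^Suc L" using \<open>u \<noteq> w\<close> by (simp add: omega_dist_def L_def)
  moreover have "0 \<le> omega_dist u v" "0 \<le> omega_dist v w" by (simp_all add: omega_dist_def)
  ultimately have "omega_dist u v < (1/2)^Suc L" "omega_dist v w < (1/2)^Suc L"
    using contr by linarith+
  then show False using L unfolding omega_dist_less_power_iff by auto
qed

lemma Metric_space_omega: "Metric_space (omega_space N) omega_dist"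
proof
  fix x y z :: "nat \<Rightarrow> nat"
  show "0 \<le> omega_dist x y" by (simp add: omega_dist_def)
  show "omega_dist x y = omega_dist y x" by (rule omega_dist_commute)
  show "omega_dist x y = 0 \<longleftrightarrow> x = y" by (simp add: omega_dist_def)
  show "omega_dist x z \<le> omega_dist x y + omega_dist y z" by (rule omega_dist_triangle)
qed

lemma topspace_omega_top: "topspace (omega_top N) = omega_space N"
  unfolding omega_top_def using Metric_space.topspace_mtopology[OF Metric_space_omega] .

definition cylinder :: "nat \<Rightarrow> (nat \<Rightarrow> nat) \<Rightarrow> nat \<Rightarrow> (nat \<Rightarrow> nat) set" where
  "cylinder N \<omega> n = {v \<in> omega_space N. \<forall>i<n. v i = \<omega> i}"

lemma cylinder_eq_mball:
  "\<omega> \<in> omega_space N \<Longrightarrow> cylinder N \<omega> n = Metric_space.mball (omega_space N) omega_dist \<omega> ((1/2)^n)"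
  unfolding cylinder_def Metric_space.mball_def[OF Metric_space_omega] omega_dist_less_power_iff
  by auto

lemma openin_cylinder: "\<omega> \<in> omega_space N \<Longrightarrow> openin (omega_top N) (cylinder N \<omega> n)"
  unfolding omega_top_def cylinder_eq_mball by (rule Metric_space.openin_mball[OF Metric_space_omega])

lemma cylinder_antimono: "n \<le> m \<Longrightarrow> cylinder N \<omega> m \<subseteq> cylinder N \<omega> n"
  by (auto simp: cylinder_def)

lemma openin_omega_top_contains_cylinder:
  assumes "openin (omega_top N) U" "\<omega> \<in> U"
  obtains n where "cylinder N \<omega> n \<subseteq> U"
proof -
  have U: "U \<subseteq> omega_space N" and "\<exists>r>0. Metric_space.mball (omega_space N) omega_dist \<omega> r \<subseteq> U"
    using assms unfolding omega_top_def Metric_space.openin_mtopology[OF Metric_space_omega] by auto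
  then obtain r where r: "r > 0" "Metric_space.mball (omega_space N) omega_dist \<omega> r \<subseteq> U"
    by auto
  have "eventually (\<lambda>n. (1/2::real)^n < r) sequentially"
    using r(1) by (intro order_tendstoD(2)[OF LIMSEQ_power_zero]) auto
  then obtain n where "(1/2::real)^n < r" by (auto simp: eventually_sequentially)
  have "cylinder N \<omega> n = Metric_space.mball (omega_space N) omega_dist \<omega> ((1/2)^n)"
    using U assms(2) by (intro cylinder_eq_mball) blast
  also have "\<dots> \<subseteq> Metric_space.mball (omega_space N) omega_dist \<omega> r"
    using \<open>(1/2)^n < r\<close> by (intro Metric_space.mball_subset_concentric[OF Metric_space_omega]) simp
  also have "\<dots> \<subseteq> U" by (rule r(2))
  finally show ?thesis by (rule that)
qed

lemma nowhere_denseI: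
  assumes "A \<subseteq> topspace X"
    and "\<And>U. openin X U \<Longrightarrow> U \<noteq> {} \<Longrightarrow> \<exists>V. openin X V \<and> V \<noteq> {} \<and> V \<subseteq> U \<and> V \<inter> A = {}"
  shows "nowhere_dense X A"
  unfolding nowhere_dense_def
proof (intro conjI assms(1) equals0I)
  fix y assume "y \<in> X interior_of (X closure_of A)"
  then obtain V where V: "openin X V" "V \<noteq> {}" "V \<subseteq> X interior_of (X closure_of A)" "V \<inter> A = {}"
    using assms(2)[OF openin_interior_of] by blast
  then obtain z where "z \<in> V" by blast
  then have "z \<in> X closure_of A" using V(3) interior_of_subset[of X "X closure_of A"] by blast
  then have "\<exists>a. a \<in> A \<and> a \<in> V" using V(1) \<open>z \<in> V\<close> unfolding in_closure_of by blast
  then show False using V(4) by blast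
qed

lemma residual_omega_topI:
  fixes B :: "nat \<Rightarrow> (nat \<Rightarrow> nat) set"
  assumes T: "T \<subseteq> omega_space N"
    and cover: "omega_space N - T \<subseteq> (\<Union>k. B k)"
    and avoid: "\<And>k \<omega> n. \<omega> \<in> omega_space N \<Longrightarrow>
       \<exists>\<omega>'\<in>cylinder N \<omega> n. \<exists>m. cylinder N \<omega>' m \<inter> B k = {}"
  shows "residual (omega_top N) T"
proof -
  define B' where "B' k = B k \<inter> omega_space N" for k
  have nowhere_dense_B': "nowhere_dense (omega_top N) (B' k)" for k
  proof (rule nowhere_denseI)
    show "B' k \<subseteq> topspace (omega_top N)" by (simp add: B'_def topspace_omega_top)
    fix U assume U: "openin (omega_top N) U" "U \<noteq> {}"
    then obtain \<omega> where \<omega>: "\<omega> \<in> U" by auto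
    have "\<omega> \<in> omega_space N" using openin_subset[OF U(1)] \<omega> topspace_omega_top by auto
    obtain n where n: "cylinder N \<omega> n \<subseteq> U"
      using openin_omega_top_contains_cylinder[OF U(1) \<omega>] .
    obtain \<omega>' m where \<omega>': "\<omega>' \<in> cylinder N \<omega> n" "cylinder N \<omega>' m \<inter> B k = {}"
      using avoid[OF \<open>\<omega> \<in> omega_space N\<close>] by blast
    define V where "V = cylinder N \<omega>' (max m n)"
    have "\<omega>' \<in> omega_space N" using \<omega>'(1) by (simp add: cylinder_def)
    then have "openin (omega_top N) V" "V \<noteq> {}"
      unfolding V_def by (auto simp: openin_cylinder) (auto simp: cylinder_def)
    moreover have "V \<subseteq> U" using n \<omega>'(1) by (auto simp: V_def cylinder_def)
    moreover have "V \<subseteq> cylinder N \<omega>' m" unfolding V_def by (rule cylinder_antimono) simp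
    then have "V \<inter> B' k = {}" using \<omega>'(2) by (auto simp: B'_def)
    ultimately show "\<exists>V. openin (omega_top N) V \<and> V \<noteq> {} \<and> V \<subseteq> U \<and> V \<inter> B' k = {}"
      by blast
  qed
  moreover have "omega_space N - T \<subseteq> (\<Union>k. B' k)" using cover by (auto simp: B'_def)
  ultimately have "(\<forall>k. nowhere_dense (omega_top N) (B' k)) \<and> omega_space N - T \<subseteq> (\<Union>k. B' k)"
    by blast
  then show ?thesis
    using T unfolding residual_def topspace_omega_top by blast
qed

section \<open>Words, shifts and compositions\<close>

definition shift :: "nat \<Rightarrow> (nat \<Rightarrow> 'b) \<Rightarrow> nat \<Rightarrow> 'b" where "shift n \<omega> = (\<lambda>i. \<omega> (n + i))"

lemma shift_apply [simp]: "shift n \<omega> i = \<omega> (n + i)"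
  by (simp add: shift_def)

lemma shift_shift [simp]: "shift a (shift b \<omega>) = shift (b + a) \<omega>"
  by (simp add: shift_def add.assoc)

lemma wcomp_cong:
  "(\<And>i. i < k \<Longrightarrow> \<omega> i = \<omega>' i) \<Longrightarrow> (\<And>i. i < k \<Longrightarrow> j i = j' i) \<Longrightarrow> wcomp S \<omega> j k = wcomp S \<omega>' j' k"
  by (induction k) auto

lemma wcomp_add: "wcomp S \<omega> j (a + b) = wcomp S \<omega> j a \<circ> wcomp S (shift a \<omega>) (shift a j) b"
  by (induction b) (auto simp: o_assoc)

lemma words_cong: "(\<And>i. i < k \<Longrightarrow> \<omega> i = \<omega>' i) \<Longrightarrow> words I \<omega> k = words I \<omega>' k"
  unfolding words_def by (rule PiE_cong) auto

lemma wordsD: "j \<in> words I \<omega> k \<Longrightarrow> i < k \<Longrightarrow> j i \<in> I (\<omega> i)"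
  by (auto simp: words_def)

lemma restrict_in_words: "(\<And>i. i < k \<Longrightarrow> j i \<in> I (\<omega> i)) \<Longrightarrow> restrict j {..<k} \<in> words I \<omega> k"
  by (auto simp: words_def)

lemma finite_words:
  assumes "\<And>i. i < k \<Longrightarrow> finite (I (\<omega> i))"
  shows "finite (words I \<omega> k)"
  unfolding words_def by (rule finite_PiE) (use assms in auto)

lemma words_not_empty:
  assumes "\<And>i. i < k \<Longrightarrow> I (\<omega> i) \<noteq> {}"
  shows "words I \<omega> k \<noteq> {}"
  unfolding words_def using assms by (auto simp: PiE_eq_empty_iff)

lemma wcomp_split:
  assumes "m < n"
  shows "wcomp S \<omega> J n = wcomp S \<omega> J m \<circ> S (\<omega> m) (J m) \<circ> wcomp S (shift (Suc m) \<omega>) (shift (Suc m) J) (n - Suc m)"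
proof -
  have n: "n = m + (1 + (n - Suc m))" using assms by simp
  have "wcomp S \<omega> J n = wcomp S \<omega> J m \<circ> wcomp S (shift m \<omega>) (shift m J) (1 + (n - Suc m))"
    by (subst n, rule wcomp_add)
  also have "wcomp S (shift m \<omega>) (shift m J) (1 + (n - Suc m)) =
      wcomp S (shift m \<omega>) (shift m J) 1 \<circ> wcomp S (shift 1 (shift m \<omega>)) (shift 1 (shift m J)) (n - Suc m)"
    by (rule wcomp_add)
  also have "wcomp S (shift m \<omega>) (shift m J) 1 = S (\<omega> m) (J m)" by simp
  also have "shift 1 (shift m \<omega>) = shift (Suc m) \<omega>" by simp
  also have "shift 1 (shift m J) = shift (Suc m) J" by simp
  finally show ?thesis by (simp only: comp_assoc)
qed

lemma words_first_difference:
  assumes "j \<in> words I \<omega> n" "j' \<in> words I \<omega> n" "j \<noteq> j'"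
  obtains m where "m < n" "j m \<noteq> j' m" "\<And>i. i < m \<Longrightarrow> j i = j' i"
proof -
  have ex: "\<exists>i. i < n \<and> j i \<noteq> j' i"
  proof (rule ccontr)
    assume "\<not> ?thesis"
    then have "j = j'" using assms(1,2) unfolding words_def
      by (intro extensionalityI[of _ "{..<n}"]) (auto simp: PiE_iff)
    then show False using assms(3) by simp
  qed
  define m where "m = (LEAST i. i < n \<and> j i \<noteq> j' i)"
  have "m < n" "j m \<noteq> j' m" using LeastI_ex[OF ex] unfolding m_def by auto
  moreover have "j i = j' i" if "i < m" for i
    using not_less_Least[of i "\<lambda>i. i < n \<and> j i \<noteq> j' i"] \<open>m < n\<close> that unfolding m_def by auto
  ultimately show ?thesis using that by blast
qed

definition splice :: "(nat \<Rightarrow> 'b) \<Rightarrow> nat \<Rightarrow> (nat \<Rightarrow> 'b) \<Rightarrow> nat \<Rightarrow> 'b" where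
  "splice \<omega> n u = (\<lambda>i. if i < n then \<omega> i else u (i - n))"

lemma shift_splice [simp]: "shift n (splice \<omega> n u) = u"
  by (rule ext) (simp add: splice_def)

lemma splice_below: "i < n \<Longrightarrow> splice \<omega> n u i = \<omega> i"
  by (simp add: splice_def)

lemma splice_in_omega_space:
  "\<omega> \<in> omega_space N \<Longrightarrow> u \<in> omega_space N \<Longrightarrow> splice \<omega> n u \<in> omega_space N"
  by (auto simp: splice_def omega_space_def)

lemma splice_in_cylinder:
  "\<omega> \<in> omega_space N \<Longrightarrow> u \<in> omega_space N \<Longrightarrow> splice \<omega> n u \<in> cylinder N \<omega> n"
  by (simp add: cylinder_def splice_in_omega_space splice_below)

section \<open>Random iterated function systems\<close>

locale random_ifs =
  fixes K :: "'a::metric_space set" and N :: nat and I :: "nat \<Rightarrow> nat set"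
    and S :: "nat \<Rightarrow> nat \<Rightarrow> 'a \<Rightarrow> 'a"
  assumes K: "compact K" and N: "N \<ge> 1"
    and I: "\<And>l. l \<in> {1..N} \<Longrightarrow> finite (I l) \<and> I l \<noteq> {}"
    and S_maps: "\<And>l i. l \<in> {1..N} \<Longrightarrow> i \<in> I l \<Longrightarrow> S l i ` K \<subseteq> K"
    and S_bilip: "\<And>l i. l \<in> {1..N} \<Longrightarrow> i \<in> I l \<Longrightarrow>
        0 < lip_lower K (S l i) \<and> ereal (lip_lower K (S l i)) \<le> lip_upper K (S l i)
        \<and> lip_upper K (S l i) < 1"
begin

abbreviation \<Omega> where "\<Omega> \<equiv> omega_space N"

definition level where "level \<omega> k = (\<Union>j\<in>words I \<omega> k. wcomp S \<omega> j k ` K)"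

abbreviation F where "F \<omega> \<equiv> rattractor K I S \<omega>"

lemma rattractor_eq_INT_level: "F \<omega> = (\<Inter>k. level \<omega> k)"
  by (simp add: rattractor_def level_def)

lemma omega_spaceD: "\<omega> \<in> \<Omega> \<Longrightarrow> \<omega> i \<in> {1..N}"
  by (auto simp: omega_space_def)

lemma shift_in_omega_space: "\<omega> \<in> \<Omega> \<Longrightarrow> shift n \<omega> \<in> \<Omega>"
  by (auto simp: omega_space_def)

text \<open>On a one-point K every lip_upper is the supremum of the empty set, i.e. -\<infinity>, which the
  bilipschitz hypothesis excludes.\<close>
lemma K_two_points: obtains a b where "a \<in> K" "b \<in> K" "a \<noteq> b"
proof -
  have 1: "(1::nat) \<in> {1..N}" using N by auto
  then obtain i where i: "i \<in> I 1" using I by blast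
  show ?thesis
  proof (rule ccontr)
    assume "\<not> thesis"
    then have "\<forall>a\<in>K. \<forall>b\<in>K. a = b" using that by blast
    then have E: "{ereal (dist (S 1 i x) (S 1 i y) / dist x y) |x y. x \<in> K \<and> y \<in> K \<and> x \<noteq> y} = {}" by auto
    have "lip_upper K (S 1 i) = Sup {}" unfolding lip_upper_def E ..
    then have "lip_upper K (S 1 i) = -\<infinity>" by (simp add: bot_ereal_def)
    then show False using S_bilip[OF 1 i] by simp
  qed
qed

lemma K_nonempty: "K \<noteq> {}" using K_two_points by blast

lemma lip_lower_S_pos: "l \<in> {1..N} \<Longrightarrow> i \<in> I l \<Longrightarrow> 0 < lip_lower K (S l i)"
  using S_bilip by blast

lemma lip_upper_S_real:
  assumes "l \<in> {1..N}" "i \<in> I l"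
  obtains c where "lip_upper K (S l i) = ereal c" "0 < c" "c < 1"
proof -
  have bounds: "0 < lip_lower K (S l i)" "ereal (lip_lower K (S l i)) \<le> lip_upper K (S l i)"
    "lip_upper K (S l i) < 1" using S_bilip[OF assms] by auto
  then obtain c where "lip_upper K (S l i) = ereal c" by (cases "lip_upper K (S l i)") auto
  with bounds show ?thesis using that by auto
qed

definition ratio :: real where
  "ratio = Max ((\<lambda>(l, i). real_of_ereal (lip_upper K (S l i))) ` (SIGMA l:{1..N}. I l))"

lemma finite_map_indices: "finite (SIGMA l:{1..N}. I l)"
  using I by (intro finite_SigmaI) auto

lemma ratio_nonneg: "0 \<le> ratio" and ratio_less_1: "ratio < 1"
proof -
  obtain i where "i \<in> I 1" using I[of 1] N by auto
  then have "(1, i) \<in> (SIGMA l:{1..N}. I l)" using N by auto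
  then have "(SIGMA l:{1..N}. I l) \<noteq> {}" by blast
  then have "ratio \<in> (\<lambda>(l, i). real_of_ereal (lip_upper K (S l i))) ` (SIGMA l:{1..N}. I l)"
    unfolding ratio_def using finite_map_indices by (intro Max_in) auto
  then obtain l i where li: "l \<in> {1..N}" "i \<in> I l" "ratio = real_of_ereal (lip_upper K (S l i))"
    by auto
  obtain c where "lip_upper K (S l i) = ereal c" "0 < c" "c < 1" using lip_upper_S_real[OF li(1,2)] .
  then show "0 \<le> ratio" "ratio < 1" using li(3) by auto
qed

lemma S_contraction:
  assumes "l \<in> {1..N}" "i \<in> I l" "x \<in> K" "y \<in> K"
  shows "dist (S l i x) (S l i y) \<le> ratio * dist x y"
proof (rule dist_le_of_lip_upper_le[OF assms(3,4)])
  obtain c where c: "lip_upper K (S l i) = ereal c" using lip_upper_S_real[OF assms(1,2)] by blast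
  have "c \<le> ratio"
    unfolding ratio_def using finite_map_indices assms(1,2) c by (intro Max_ge) force+
  then show "lip_upper K (S l i) \<le> ereal ratio" using c by simp
qed

lemma wcomp_maps_K:
  "\<omega> \<in> \<Omega> \<Longrightarrow> (\<And>i. i < k \<Longrightarrow> j i \<in> I (\<omega> i)) \<Longrightarrow> wcomp S \<omega> j k ` K \<subseteq> K"
proof (induction k)
  case 0 then show ?case by simp
next
  case (Suc k)
  have "wcomp S \<omega> j (Suc k) ` K = wcomp S \<omega> j k ` (S (\<omega> k) (j k) ` K)" by (simp add: image_comp)
  also have "\<dots> \<subseteq> wcomp S \<omega> j k ` K"
    using S_maps[OF omega_spaceD[OF Suc.prems(1)] Suc.prems(2)[of k]] by (intro image_mono) auto
  also have "\<dots> \<subseteq> K" using Suc by auto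
  finally show ?case .
qed

lemma wcomp_contraction:
  "\<omega> \<in> \<Omega> \<Longrightarrow> (\<And>i. i < k \<Longrightarrow> j i \<in> I (\<omega> i)) \<Longrightarrow> x \<in> K \<Longrightarrow> y \<in> K \<Longrightarrow>
    dist (wcomp S \<omega> j k x) (wcomp S \<omega> j k y) \<le> ratio^k * dist x y"
proof (induction k arbitrary: x y)
  case 0 then show ?case by simp
next
  case (Suc k)
  have l: "\<omega> k \<in> {1..N}" "j k \<in> I (\<omega> k)" using omega_spaceD[OF Suc.prems(1)] Suc.prems(2) by auto
  have SK: "S (\<omega> k) (j k) x \<in> K" "S (\<omega> k) (j k) y \<in> K" using S_maps[OF l] Suc.prems by auto
  have "dist (wcomp S \<omega> j (Suc k) x) (wcomp S \<omega> j (Suc k) y)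
      = dist (wcomp S \<omega> j k (S (\<omega> k) (j k) x)) (wcomp S \<omega> j k (S (\<omega> k) (j k) y))" by simp
  also have "\<dots> \<le> ratio^k * dist (S (\<omega> k) (j k) x) (S (\<omega> k) (j k) y)"
    using Suc.IH[OF Suc.prems(1) _ SK] Suc.prems(2) by auto
  also have "\<dots> \<le> ratio^k * (ratio * dist x y)"
    using S_contraction[OF l Suc.prems(3,4)] ratio_nonneg by (intro mult_left_mono) auto
  finally show ?case by (simp add: mult_ac)
qed

lemma wcomp_nonexpanding:
  "\<omega> \<in> \<Omega> \<Longrightarrow> (\<And>i. i < k \<Longrightarrow> j i \<in> I (\<omega> i)) \<Longrightarrow> x \<in> K \<Longrightarrow> y \<in> K \<Longrightarrow>
    dist (wcomp S \<omega> j k x) (wcomp S \<omega> j k y) \<le> dist x y"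
proof -
  assume a: "\<omega> \<in> \<Omega>" "\<And>i. i < k \<Longrightarrow> j i \<in> I (\<omega> i)" "x \<in> K" "y \<in> K"
  have "ratio^k \<le> 1" using ratio_nonneg ratio_less_1 by (intro power_le_one) auto
  then have "ratio^k * dist x y \<le> 1 * dist x y" by (intro mult_right_mono) auto
  then show ?thesis using wcomp_contraction[where k=k, OF a] by linarith
qed

lemma lip_lower_wcomp_pos:
  "\<omega> \<in> \<Omega> \<Longrightarrow> (\<And>i. i < k \<Longrightarrow> j i \<in> I (\<omega> i)) \<Longrightarrow> 0 < lip_lower K (wcomp S \<omega> j k)"
proof (induction k)
  case 0
  obtain a b where "a \<in> K" "b \<in> K" "a \<noteq> b" by (rule K_two_points)
  then have "lip_lower K id = 1" by (rule lip_lower_id)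
  then show ?case by (simp add: id_def)
next
  case (Suc k)
  obtain a b where ab: "a \<in> K" "b \<in> K" "a \<noteq> b" by (rule K_two_points)
  have l: "\<omega> k \<in> {1..N}" "j k \<in> I (\<omega> k)" using omega_spaceD[OF Suc.prems(1)] Suc.prems(2) by auto
  have "0 < lip_lower K (wcomp S \<omega> j k) * lip_lower K (S (\<omega> k) (j k))"
    using Suc lip_lower_S_pos[OF l] by auto
  also have "\<dots> \<le> lip_lower K (wcomp S \<omega> j k \<circ> S (\<omega> k) (j k))"
    by (rule lip_lower_comp[OF ab S_maps[OF l]])
  also have "wcomp S \<omega> j k \<circ> S (\<omega> k) (j k) = wcomp S \<omega> j (Suc k)" by simp
  finally show ?case .
qed

lemma inj_on_wcomp:
  assumes "\<omega> \<in> \<Omega>" "\<And>i. i < k \<Longrightarrow> j i \<in> I (\<omega> i)"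
  shows "inj_on (wcomp S \<omega> j k) K"
proof (rule inj_onI)
  fix x y assume xy: "x \<in> K" "y \<in> K" "wcomp S \<omega> j k x = wcomp S \<omega> j k y"
  have "lip_lower K (wcomp S \<omega> j k) * dist x y \<le> 0"
    using lip_lower_mult_dist_le[OF xy(1,2), of "wcomp S \<omega> j k"] xy(3) by simp
  then show "x = y" using lip_lower_wcomp_pos[where k=k, OF assms]
    by (simp add: mult_le_0_iff)
qed

lemma continuous_on_wcomp:
  assumes "\<omega> \<in> \<Omega>" "\<And>i. i < k \<Longrightarrow> j i \<in> I (\<omega> i)"
  shows "continuous_on K (wcomp S \<omega> j k)"
  unfolding continuous_on_iff
proof (intro ballI allI impI)
  fix x and e :: real assume x: "x \<in> K" and e: "0 < e"
  show "\<exists>d>0. \<forall>x'\<in>K. dist x' x < d \<longrightarrow> dist (wcomp S \<omega> j k x') (wcomp S \<omega> j k x) < e"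
  proof (intro exI[of _ e] conjI ballI impI)
    fix x' assume "x' \<in> K" "dist x' x < e"
    then show "dist (wcomp S \<omega> j k x') (wcomp S \<omega> j k x) < e"
      using wcomp_nonexpanding[where k=k, OF assms \<open>x' \<in> K\<close> x] by linarith
  qed (rule e)
qed

lemma finite_words_omega: "\<omega> \<in> \<Omega> \<Longrightarrow> finite (words I \<omega> k)"
  by (rule finite_words) (use I omega_spaceD in blast)

lemma words_omega_nonempty: "\<omega> \<in> \<Omega> \<Longrightarrow> words I \<omega> k \<noteq> {}"
  by (rule words_not_empty) (use I omega_spaceD in blast)

lemma level_subset_K: "\<omega> \<in> \<Omega> \<Longrightarrow> level \<omega> k \<subseteq> K"
  unfolding level_def using wcomp_maps_K wordsD by blast

lemma compact_level: "\<omega> \<in> \<Omega> \<Longrightarrow> compact (level \<omega> k)"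
  unfolding level_def
  by (intro compact_UN finite_words_omega compact_continuous_image continuous_on_wcomp K) (auto dest: wordsD)

lemma level_nonempty: "\<omega> \<in> \<Omega> \<Longrightarrow> level \<omega> k \<noteq> {}"
  unfolding level_def using words_omega_nonempty K_nonempty by blast

lemma level_0: "level \<omega> 0 = K"
  by (simp add: level_def words_def)

lemma level_Suc_subset: assumes "\<omega> \<in> \<Omega>" shows "level \<omega> (Suc k) \<subseteq> level \<omega> k"
proof
  fix x assume "x \<in> level \<omega> (Suc k)"
  then obtain j z where jz: "j \<in> words I \<omega> (Suc k)" "z \<in> K" "x = wcomp S \<omega> j (Suc k) z"
    unfolding level_def by blast
  have l: "\<omega> k \<in> {1..N}" "j k \<in> I (\<omega> k)" using omega_spaceD[OF assms] wordsD[OF jz(1)] by auto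
  define j' where "j' = restrict j {..<k}"
  have j': "j' \<in> words I \<omega> k" unfolding j'_def by (rule restrict_in_words) (use wordsD[OF jz(1)] in auto)
  have eq: "wcomp S \<omega> j' k = wcomp S \<omega> j k" by (rule wcomp_cong) (auto simp: j'_def)
  have "S (\<omega> k) (j k) z \<in> K" using S_maps[OF l] jz(2) by auto
  moreover have "x = wcomp S \<omega> j' k (S (\<omega> k) (j k) z)" using jz(3) eq by simp
  ultimately show "x \<in> level \<omega> k" using j' unfolding level_def by blast
qed

lemma level_antimono: "\<omega> \<in> \<Omega> \<Longrightarrow> k \<le> k' \<Longrightarrow> level \<omega> k' \<subseteq> level \<omega> k"
  using lift_Suc_antimono_le[of "level \<omega>"] level_Suc_subset by blast

lemma rattractor_subset_level: "F \<omega> \<subseteq> level \<omega> k"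
  unfolding rattractor_eq_INT_level by blast

lemma rattractor_subset_K: "F \<omega> \<subseteq> K"
  using rattractor_subset_level[of \<omega> 0] level_0 by simp

lemma compact_rattractor: assumes "\<omega> \<in> \<Omega>" shows "compact (F \<omega>)"
proof -
  have "F \<omega> = K \<inter> (\<Inter>k. level \<omega> k)" using rattractor_subset_K unfolding rattractor_eq_INT_level by blast
  also have "compact \<dots>"
    by (rule compact_Int_closed[OF K]) (use compact_level[OF assms] compact_imp_closed in blast)
  finally show ?thesis .
qed

lemma rattractor_nonempty: assumes "\<omega> \<in> \<Omega>" shows "F \<omega> \<noteq> {}"
proof -
  have "K \<inter> (\<Inter>k\<in>UNIV. level \<omega> k) \<noteq> {}"
  proof (rule compact_imp_fip_image[OF K])
    show "closed (level \<omega> k)" for k using compact_level[OF assms] compact_imp_closed by blast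
    fix J :: "nat set" assume J: "finite J" "J \<subseteq> UNIV"
    show "K \<inter> (\<Inter>k\<in>J. level \<omega> k) \<noteq> {}"
    proof (cases "J = {}")
      case True then show ?thesis using K_nonempty by simp
    next
      case False
      have "level \<omega> (Max J) \<subseteq> K \<inter> (\<Inter>k\<in>J. level \<omega> k)"
        using level_subset_K[OF assms] level_antimono[OF assms] Max_ge[OF J(1)] by blast
      then show ?thesis using level_nonempty[OF assms] by blast
    qed
  qed
  then show ?thesis unfolding rattractor_eq_INT_level by blast
qed

lemma level_add_subset:
  "level \<omega> (n + k) \<subseteq> (\<Union>j\<in>words I \<omega> n. wcomp S \<omega> j n ` level (shift n \<omega>) k)"
proof
  fix x assume "x \<in> level \<omega> (n + k)"
  then obtain J z where Jz: "J \<in> words I \<omega> (n+k)" "z \<in> K" "x = wcomp S \<omega> J (n+k) z"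
    unfolding level_def by blast
  define j1 where "j1 = restrict J {..<n}"
  have j1: "j1 \<in> words I \<omega> n" unfolding j1_def
    by (rule restrict_in_words) (use wordsD[OF Jz(1)] in auto)
  define j2 where "j2 = restrict (shift n J) {..<k}"
  have j2: "j2 \<in> words I (shift n \<omega>) k" unfolding j2_def
    by (rule restrict_in_words) (use wordsD[OF Jz(1)] in auto)
  have "wcomp S \<omega> J (n+k) = wcomp S \<omega> J n \<circ> wcomp S (shift n \<omega>) (shift n J) k" by (rule wcomp_add)
  also have "wcomp S \<omega> J n = wcomp S \<omega> j1 n" by (rule wcomp_cong) (auto simp: j1_def)
  also have "wcomp S (shift n \<omega>) (shift n J) k = wcomp S (shift n \<omega>) j2 k"
    by (rule wcomp_cong) (auto simp: j2_def)
  finally have "x = wcomp S \<omega> j1 n (wcomp S (shift n \<omega>) j2 k z)" using Jz(3) by simp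
  moreover have "wcomp S (shift n \<omega>) j2 k z \<in> level (shift n \<omega>) k"
    using j2 Jz(2) unfolding level_def by blast
  ultimately show "x \<in> (\<Union>j\<in>words I \<omega> n. wcomp S \<omega> j n ` level (shift n \<omega>) k)"
    using j1 by blast
qed

lemma wcomp_image_level_shift:
  assumes j: "\<And>i. i < n \<Longrightarrow> j i \<in> I (\<omega> i)"
  shows "wcomp S \<omega> j n ` level (shift n \<omega>) k \<subseteq> level \<omega> (n + k)"
proof
  fix y assume "y \<in> wcomp S \<omega> j n ` level (shift n \<omega>) k"
  then obtain j' z where j'z: "j' \<in> words I (shift n \<omega>) k" "z \<in> K" "y = wcomp S \<omega> j n (wcomp S (shift n \<omega>) j' k z)"
    unfolding level_def by blast
  define J where "J = restrict (\<lambda>i. if i < n then j i else j' (i - n)) {..<n+k}"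
  have J: "J \<in> words I \<omega> (n+k)"
    unfolding J_def
  proof (rule restrict_in_words)
    fix i assume "i < n + k"
    then show "(if i < n then j i else j' (i - n)) \<in> I (\<omega> i)"
      using j wordsD[OF j'z(1), of "i - n"] by (cases "i < n") auto
  qed
  have "wcomp S \<omega> J (n+k) = wcomp S \<omega> J n \<circ> wcomp S (shift n \<omega>) (shift n J) k" by (rule wcomp_add)
  also have "wcomp S \<omega> J n = wcomp S \<omega> j n" by (rule wcomp_cong) (auto simp: J_def)
  also have "wcomp S (shift n \<omega>) (shift n J) k = wcomp S (shift n \<omega>) j' k"
    by (rule wcomp_cong) (auto simp: J_def)
  finally have "y = wcomp S \<omega> J (n+k) z" using j'z(3) by simp
  then show "y \<in> level \<omega> (n + k)" using J j'z(2) unfolding level_def by blast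
qed

lemma wcomp_image_rattractor_shift:
  assumes \<omega>: "\<omega> \<in> \<Omega>" and j: "\<And>i. i < n \<Longrightarrow> j i \<in> I (\<omega> i)"
  shows "wcomp S \<omega> j n ` F (shift n \<omega>) \<subseteq> F \<omega>"
proof -
  have "wcomp S \<omega> j n ` F (shift n \<omega>) \<subseteq> level \<omega> k" for k
  proof -
    have "wcomp S \<omega> j n ` F (shift n \<omega>) \<subseteq> wcomp S \<omega> j n ` level (shift n \<omega>) k"
      using rattractor_subset_level by blast
    also have "\<dots> \<subseteq> level \<omega> (n + k)" by (rule wcomp_image_level_shift[OF j])
    also have "\<dots> \<subseteq> level \<omega> k" by (rule level_antimono[OF \<omega>]) simp
    finally show ?thesis .
  qed
  then show ?thesis unfolding rattractor_eq_INT_level by blast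
qed

lemma rattractor_subset_UN_wcomp_image:
  assumes \<omega>: "\<omega> \<in> \<Omega>"
  shows "F \<omega> \<subseteq> (\<Union>j\<in>words I \<omega> n. wcomp S \<omega> j n ` F (shift n \<omega>))"
proof
  fix x assume x: "x \<in> F \<omega>"
  let ?W = "words I \<omega> n"
  have key: "\<exists>j\<in>?W. \<exists>y\<in>level (shift n \<omega>) k. x = wcomp S \<omega> j n y" for k
    using x rattractor_subset_level[of \<omega> "n + k"] level_add_subset[of \<omega> n k] by blast
  show "x \<in> (\<Union>j\<in>?W. wcomp S \<omega> j n ` F (shift n \<omega>))"
  proof (rule ccontr)
    assume nx: "x \<notin> (\<Union>j\<in>?W. wcomp S \<omega> j n ` F (shift n \<omega>))"
    have "\<forall>j\<in>?W. \<exists>k. \<forall>y\<in>level (shift n \<omega>) k. x \<noteq> wcomp S \<omega> j n y"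
    proof
      fix j assume j: "j \<in> ?W"
      show "\<exists>k. \<forall>y\<in>level (shift n \<omega>) k. x \<noteq> wcomp S \<omega> j n y"
      proof (cases "\<exists>y\<in>K. x = wcomp S \<omega> j n y")
        case False then show ?thesis using level_subset_K[OF shift_in_omega_space[OF \<omega>]] by blast
      next
        case True
        then obtain y where y: "y \<in> K" "x = wcomp S \<omega> j n y" by blast
        then have "y \<notin> F (shift n \<omega>)" using nx j by blast
        then obtain k where k: "y \<notin> level (shift n \<omega>) k" unfolding rattractor_eq_INT_level by blast
        have inj: "inj_on (wcomp S \<omega> j n) K" by (rule inj_on_wcomp[where k=n, OF \<omega> wordsD[OF j]])
        have "\<forall>y'\<in>level (shift n \<omega>) k. x \<noteq> wcomp S \<omega> j n y'"
        proof (intro ballI notI)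
          fix y' assume y': "y' \<in> level (shift n \<omega>) k" "x = wcomp S \<omega> j n y'"
          have "y' \<in> K" using y'(1) level_subset_K[OF shift_in_omega_space[OF \<omega>]] by blast
          then have "y' = y" using inj y y'(2) by (auto simp: inj_on_def)
          then show False using k y'(1) by simp
        qed
        then show ?thesis by blast
      qed
    qed
    then obtain kf where kf: "\<And>j. j \<in> ?W \<Longrightarrow> \<forall>y\<in>level (shift n \<omega>) (kf j). x \<noteq> wcomp S \<omega> j n y"
      by metis
    define k where "k = Max (kf ` ?W)"
    obtain j y where jy: "j \<in> ?W" "y \<in> level (shift n \<omega>) k" "x = wcomp S \<omega> j n y" using key by blast
    have "kf j \<le> k" unfolding k_def using jy(1) finite_words_omega[OF \<omega>] by (intro Max_ge) auto
    then have "y \<in> level (shift n \<omega>) (kf j)" using level_antimono[OF shift_in_omega_space[OF \<omega>]] jy(2) by blast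
    then show False using kf[OF jy(1)] jy(3) by blast
  qed
qed

lemma wcomp_image_meets_rattractor:
  assumes "\<omega> \<in> \<Omega>" "j \<in> words I \<omega> m"
  shows "\<exists>y\<in>F \<omega>. y \<in> wcomp S \<omega> j m ` K"
proof -
  obtain u where u: "u \<in> F (shift m \<omega>)" using rattractor_nonempty[OF shift_in_omega_space[OF assms(1)]] by blast
  have "wcomp S \<omega> j m u \<in> F \<omega>" using wcomp_image_rattractor_shift[where n=m, OF assms(1) wordsD[OF assms(2)]] u by blast
  moreover have "u \<in> K" using u rattractor_subset_K by blast
  ultimately show ?thesis by blast
qed

lemma dist_wcomp_image_le:
  assumes "\<omega> \<in> \<Omega>" "j \<in> words I \<omega> m" "x \<in> wcomp S \<omega> j m ` K" "y \<in> wcomp S \<omega> j m ` K"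
  shows "dist x y \<le> ratio^m * diameter K"
proof -
  obtain a b where ab: "a \<in> K" "b \<in> K" "x = wcomp S \<omega> j m a" "y = wcomp S \<omega> j m b" using assms(3,4) by blast
  have "dist x y \<le> ratio^m * dist a b" using wcomp_contraction[where k=m, OF assms(1) wordsD[OF assms(2)] ab(1,2)] ab(3,4) by simp
  also have "\<dots> \<le> ratio^m * diameter K"
    using diameter_bounded_bound[OF compact_imp_bounded[OF K] ab(1,2)] ratio_nonneg
    by (intro mult_left_mono) auto
  finally show ?thesis .
qed

lemma level_cong: "(\<And>i. i < m \<Longrightarrow> v i = \<omega> i) \<Longrightarrow> level v m = level \<omega> m"
proof -
  assume a: "\<And>i. i < m \<Longrightarrow> v i = \<omega> i"
  have "words I v m = words I \<omega> m" by (rule words_cong) (use a in auto)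
  moreover have "wcomp S v j m = wcomp S \<omega> j m" for j by (rule wcomp_cong) (use a in auto)
  ultimately show ?thesis unfolding level_def by simp
qed

lemma hausdorff_rattractor_le_card_words:
  assumes \<omega>: "\<omega> \<in> \<Omega>" and h: "0 \<le> h"
  shows "hausdorff_measure h (F \<omega>) \<le> of_nat (card (words I \<omega> n)) * hausdorff_measure h (F (shift n \<omega>))"
proof -
  let ?W = "words I \<omega> n"
  have "hausdorff_measure h (F \<omega>) \<le> hausdorff_measure h (\<Union>j\<in>?W. wcomp S \<omega> j n ` F (shift n \<omega>))"
    by (rule hausdorff_measure_mono[OF rattractor_subset_UN_wcomp_image[OF \<omega>]])
  also have "\<dots> \<le> (\<Sum>j\<in>?W. hausdorff_measure h (wcomp S \<omega> j n ` F (shift n \<omega>)))"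
    by (rule hausdorff_measure_UN_le[OF finite_words_omega[OF \<omega>]])
  also have "\<dots> \<le> (\<Sum>j\<in>?W. hausdorff_measure h (F (shift n \<omega>)))"
  proof (rule sum_mono)
    fix j assume j: "j \<in> ?W"
    show "hausdorff_measure h (wcomp S \<omega> j n ` F (shift n \<omega>)) \<le> hausdorff_measure h (F (shift n \<omega>))"
      by (rule hausdorff_measure_image_le[OF rattractor_subset_K _ h]) (rule wcomp_nonexpanding[where k=n, OF \<omega> wordsD[OF j]])
  qed
  also have "\<dots> = of_nat (card ?W) * hausdorff_measure h (F (shift n \<omega>))" by simp
  finally show ?thesis .
qed

lemma hausdorff_wcomp_image_ge:
  assumes \<omega>: "\<omega> \<in> \<Omega>" and j: "j \<in> words I \<omega> n" and h: "0 \<le> h"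
  shows "ennreal (lip_lower K (wcomp S \<omega> j n) powr h) * hausdorff_measure h (F (shift n \<omega>))
    \<le> hausdorff_measure h (wcomp S \<omega> j n ` F (shift n \<omega>))"
  by (rule hausdorff_measure_image_ge[OF lip_lower_wcomp_pos[where k=n, OF \<omega> wordsD[OF j]] h
        rattractor_subset_K lip_lower_mult_dist_le])

lemma hausdorff_rattractor_ge_piece:
  assumes \<omega>: "\<omega> \<in> \<Omega>" and j: "j \<in> words I \<omega> n" and h: "0 \<le> h"
  shows "ennreal (lip_lower K (wcomp S \<omega> j n) powr h) * hausdorff_measure h (F (shift n \<omega>))
    \<le> hausdorff_measure h (F \<omega>)"
  using hausdorff_wcomp_image_ge[OF assms]
    hausdorff_measure_mono[OF wcomp_image_rattractor_shift[OF \<omega> wordsD[OF j]]]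
  by (rule order_trans)

lemma wcomp_image_rattractor_subset_prefix:
  assumes \<omega>: "\<omega> \<in> \<Omega>" and J: "J \<in> words I \<omega> n" and m: "m < n"
  shows "wcomp S \<omega> J n ` F (shift n \<omega>)
    \<subseteq> wcomp S \<omega> J m ` S (\<omega> m) (J m) ` F (shift (Suc m) \<omega>)"
proof -
  have "wcomp S (shift (Suc m) \<omega>) (shift (Suc m) J) (n - Suc m) ` F (shift (n - Suc m) (shift (Suc m) \<omega>))
      \<subseteq> F (shift (Suc m) \<omega>)"
    using wordsD[OF J] m by (intro wcomp_image_rattractor_shift shift_in_omega_space[OF \<omega>]) simp
  moreover have "shift (n - Suc m) (shift (Suc m) \<omega>) = shift n \<omega>" using m by simp
  ultimately show ?thesis
    unfolding wcomp_split[OF m, of S \<omega> J] image_comp[symmetric] by (metis image_mono)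
qed

lemma rattractor_subset_open_eventually:
  assumes \<omega>: "\<omega> \<in> \<Omega>" and G: "open G" "F \<omega> \<subseteq> G"
  obtains m where "\<And>v. v \<in> cylinder N \<omega> m \<Longrightarrow> F v \<subseteq> G"
proof -
  obtain d where d: "0 < d" "\<And>x y. x \<in> F \<omega> \<Longrightarrow> y \<in> - G \<Longrightarrow> d \<le> dist x y"
    using compact_closed_separated[OF compact_rattractor[OF \<omega>], of "- G"] G by blast
  have "(\<lambda>m. ratio^m * diameter K) \<longlonglongrightarrow> 0 * diameter K"
    using ratio_nonneg ratio_less_1 by (intro tendsto_intros) simp
  then have "eventually (\<lambda>m. ratio^m * diameter K < d) sequentially"
    using d(1) by (intro order_tendstoD(2)) simp_all
  then obtain m where m: "ratio^m * diameter K < d" by (auto simp: eventually_sequentially)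
  have "F v \<subseteq> G" if v: "v \<in> cylinder N \<omega> m" for v
  proof
    fix x assume "x \<in> F v"
    then have "x \<in> level \<omega> m"
      using rattractor_subset_level[of v m] level_cong[of m v \<omega>] v by (auto simp: cylinder_def)
    then obtain j where j: "j \<in> words I \<omega> m" "x \<in> wcomp S \<omega> j m ` K"
      unfolding level_def by blast
    \<comment> \<open>every level-m piece of F v is also a level-m piece of F \<omega>, of diameter at most ratio^m diam K\<close>
    obtain y where y: "y \<in> F \<omega>" "y \<in> wcomp S \<omega> j m ` K"
      using wcomp_image_meets_rattractor[OF \<omega> j(1)] by blast
    have "dist y x < d" using dist_wcomp_image_le[OF \<omega> j(1) y(2) j(2)] m by linarith
    then show "x \<in> G" using d(2)[OF y(1), of x] by (auto simp: not_le)
  qed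
  then show ?thesis by (rule that)
qed

lemma cylinder_with_small_premeasure:
  assumes h: "0 \<le> h" and null: "(INF u\<in>\<Omega>. hausdorff_measure h (F u)) = 0"
    and \<omega>: "\<omega> \<in> \<Omega>" and t: "0 < t"
  obtains \<omega>' m where "\<omega>' \<in> cylinder N \<omega> n"
    "\<And>v. v \<in> cylinder N \<omega>' m \<Longrightarrow> hausdorff_pre h 2 (F v) < ennreal t"
proof -
  define c where "c = card (words I \<omega> n)"
  have c: "0 < c"
    using finite_words_omega[OF \<omega>] words_omega_nonempty[OF \<omega>] by (auto simp: c_def card_gt_0_iff)
  have "(INF u\<in>\<Omega>. hausdorff_measure h (F u)) < ennreal (t / c)" using null t c by simp
  then obtain u where u: "u \<in> \<Omega>" "hausdorff_measure h (F u) < ennreal (t / c)"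
    by (auto simp: INF_less_iff)
  define \<omega>' where "\<omega>' = splice \<omega> n u"
  have \<omega>': "\<omega>' \<in> \<Omega>" "\<omega>' \<in> cylinder N \<omega> n"
    using splice_in_omega_space[OF \<omega> u(1)] splice_in_cylinder[OF \<omega> u(1)] by (simp_all add: \<omega>'_def)
  have "words I \<omega>' n = words I \<omega> n" by (rule words_cong) (simp add: \<omega>'_def splice_below)
  then have "hausdorff_measure h (F \<omega>') \<le> of_nat c * hausdorff_measure h (F u)"
    using hausdorff_rattractor_le_card_words[OF \<omega>'(1) h, of n] by (simp add: c_def \<omega>'_def)
  also have "\<dots> < of_nat c * ennreal (t / c)"
    using u(2) c by (intro ennreal_mult_strict_left_mono) (auto simp: ennreal_of_nat_eq_real_of_nat)
  also have "\<dots> = ennreal t"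
    using c t by (simp add: ennreal_of_nat_eq_real_of_nat ennreal_mult[symmetric])
  finally have "hausdorff_pre h 1 (F \<omega>') < ennreal t"
    using hausdorff_pre_le_measure[of 1 h "F \<omega>'"] by simp
  then obtain G where G: "open G" "F \<omega>' \<subseteq> G" "hausdorff_pre h (1 + 1) G < ennreal t"
    using hausdorff_pre_open_superset[OF _ _ h, of 1 "F \<omega>'" "ennreal t" 1] by auto
  obtain m where m: "\<And>v. v \<in> cylinder N \<omega>' m \<Longrightarrow> F v \<subseteq> G"
    using rattractor_subset_open_eventually[OF \<omega>'(1) G(1,2)] by blast
  have "hausdorff_pre h 2 (F v) < ennreal t" if "v \<in> cylinder N \<omega>' m" for v
    using hausdorff_pre_mono[OF m[OF that], of h 2] G(3) by simp
  with \<omega>'(2) show ?thesis by (rule that)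
qed

text \<open>The exceptional sets are defined through the premeasure at a fixed scale: unlike the
  measure itself, it is controlled by a single open cover, and it vanishes only where the
  measure does.\<close>
lemma residual_null_rattractors:
  assumes h: "0 \<le> h" and null: "(INF u\<in>\<Omega>. hausdorff_measure h (F u)) = 0"
  shows "residual (omega_top N) {\<omega> \<in> \<Omega>. hausdorff_measure h (F \<omega>) = 0}"
proof -
  define B where "B k = {\<omega> \<in> \<Omega>. ennreal (1 / Suc k) \<le> hausdorff_pre h 2 (F \<omega>)}" for k :: nat
  show ?thesis
  proof (rule residual_omega_topI[of _ N B])
    show "\<Omega> - {\<omega> \<in> \<Omega>. hausdorff_measure h (F \<omega>) = 0} \<subseteq> (\<Union>k. B k)"
    proof (rule subsetI, rule ccontr)
      fix \<omega> assume \<omega>: "\<omega> \<in> \<Omega> - {\<omega> \<in> \<Omega>. hausdorff_measure h (F \<omega>) = 0}" "\<omega> \<notin> (\<Union>k. B k)"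
      have "hausdorff_pre h 2 (F \<omega>) \<le> 0"
      proof (rule ennreal_le_epsilon)
        fix e :: real assume "0 < e"
        then obtain k :: nat where "1 / Suc k < e"
          using nat_approx_posE by blast
        moreover have "hausdorff_pre h 2 (F \<omega>) < ennreal (1 / Suc k)" using \<omega> by (auto simp: B_def not_le)
        ultimately show "hausdorff_pre h 2 (F \<omega>) \<le> 0 + ennreal e"
          by (metis add_0 ennreal_leI less_imp_le order_trans)
      qed
      then have "hausdorff_measure h (F \<omega>) = 0"
        using hausdorff_measure_eq_0_if_pre_eq_0[OF _ h] by simp
      then show False using \<omega>(1) by blast
    qed
  next
    fix k \<omega> n assume "\<omega> \<in> \<Omega>"
    obtain \<omega>' m where "\<omega>' \<in> cylinder N \<omega> n"
      "\<And>v. v \<in> cylinder N \<omega>' m \<Longrightarrow> hausdorff_pre h 2 (F v) < ennreal (1 / Suc k)"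
      using cylinder_with_small_premeasure[OF h null \<open>\<omega> \<in> \<Omega>\<close>, of "1 / Suc k"] by auto
    then show "\<exists>\<omega>'\<in>cylinder N \<omega> n. \<exists>m. cylinder N \<omega>' m \<inter> B k = {}"
      by (force simp: B_def)
  qed blast
qed

end

locale separated_rifs = random_ifs K N I S for K :: "'a::metric_space set" and N I S +
  fixes h :: real
  assumes h_nonneg: "0 \<le> h"
    and separated: "\<And>\<omega> l i j. \<omega> \<in> omega_space N \<Longrightarrow> l \<in> {1..N} \<Longrightarrow> i \<in> I l \<Longrightarrow> j \<in> I l \<Longrightarrow>
        i \<noteq> j \<Longrightarrow> hausdorff_measure h (S l i ` rattractor K I S \<omega> \<inter> S l j ` rattractor K I S \<omega>) = 0"
begin

lemma hausdorff_wcomp_images_Int_null: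
  assumes \<omega>: "\<omega> \<in> \<Omega>" and j: "j \<in> words I \<omega> n" and j': "j' \<in> words I \<omega> n" and "j \<noteq> j'"
  shows "hausdorff_measure h (wcomp S \<omega> j n ` F (shift n \<omega>) \<inter> wcomp S \<omega> j' n ` F (shift n \<omega>)) = 0"
proof -
  obtain m where m: "m < n" "j m \<noteq> j' m" and common: "\<And>i. i < m \<Longrightarrow> j i = j' i"
    using words_first_difference[OF j j' \<open>j \<noteq> j'\<close>] by blast
  define P where "P = wcomp S \<omega> j m"
  define l where "l = \<omega> m"
  define G where "G = F (shift (Suc m) \<omega>)"
  have l: "l \<in> {1..N}" "j m \<in> I l" "j' m \<in> I l"
    using omega_spaceD[OF \<omega>] wordsD[OF j m(1)] wordsD[OF j' m(1)] by (auto simp: l_def)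
  have P': "wcomp S \<omega> j' m = P" unfolding P_def by (rule wcomp_cong) (use common in auto)
  have prefix: "\<And>i. i < m \<Longrightarrow> j i \<in> I (\<omega> i)" using wordsD[OF j] m(1) by auto
  have SG: "S l (j m) ` G \<subseteq> K" "S l (j' m) ` G \<subseteq> K"
    using rattractor_subset_K S_maps[OF l(1,2)] S_maps[OF l(1,3)] by (fastforce simp: G_def)+
  \<comment> \<open>the two pieces share the prefix P, which is injective on K\<close>
  have "wcomp S \<omega> j n ` F (shift n \<omega>) \<inter> wcomp S \<omega> j' n ` F (shift n \<omega>)
      \<subseteq> P ` (S l (j m) ` G) \<inter> P ` (S l (j' m) ` G)"
    using wcomp_image_rattractor_subset_prefix[OF \<omega> j m(1)] wcomp_image_rattractor_subset_prefix[OF \<omega> j' m(1)]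
    unfolding P_def P' G_def l_def by blast
  also have "\<dots> = P ` (S l (j m) ` G \<inter> S l (j' m) ` G)"
    using inj_on_image_Int[OF inj_on_wcomp[where k=m, OF \<omega> prefix] SG] by (simp add: P_def)
  finally have "hausdorff_measure h (wcomp S \<omega> j n ` F (shift n \<omega>) \<inter> wcomp S \<omega> j' n ` F (shift n \<omega>))
      \<le> hausdorff_measure h (P ` (S l (j m) ` G \<inter> S l (j' m) ` G))"
    by (rule hausdorff_measure_mono)
  also have "\<dots> \<le> hausdorff_measure h (S l (j m) ` G \<inter> S l (j' m) ` G)"
    unfolding P_def
    by (rule hausdorff_measure_image_le[OF _ wcomp_nonexpanding[where k=m, OF \<omega> prefix] h_nonneg])
      (use SG in auto)
  also have "\<dots> = 0"
    unfolding G_def by (rule separated[OF shift_in_omega_space[OF \<omega>] l m(2)])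
  finally show ?thesis by simp
qed

lemma sum_lip_lower_hausdorff_le:
  assumes \<omega>: "\<omega> \<in> \<Omega>"
  shows "(\<Sum>j\<in>words I \<omega> n. ennreal (lip_lower K (wcomp S \<omega> j n) powr h)) * hausdorff_measure h (F (shift n \<omega>))
     \<le> hausdorff_measure h (F \<omega>)"
proof -
  let ?W = "words I \<omega> n"
  let ?F = "F (shift n \<omega>)"
  have "(\<Sum>j\<in>?W. ennreal (lip_lower K (wcomp S \<omega> j n) powr h)) * hausdorff_measure h ?F
      = (\<Sum>j\<in>?W. ennreal (lip_lower K (wcomp S \<omega> j n) powr h) * hausdorff_measure h ?F)"
    by (rule sum_distrib_right)
  also have "\<dots> \<le> (\<Sum>j\<in>?W. hausdorff_measure h (wcomp S \<omega> j n ` ?F))"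
    by (intro sum_mono hausdorff_wcomp_image_ge[OF \<omega> _ h_nonneg])
  also have "\<dots> \<le> hausdorff_measure h (\<Union>j\<in>?W. wcomp S \<omega> j n ` ?F)"
  proof (rule hausdorff_measure_UN_compact_ge[OF finite_words_omega[OF \<omega>] _ _ h_nonneg])
    fix j assume j: "j \<in> ?W"
    show "compact (wcomp S \<omega> j n ` ?F)"
      by (rule compact_continuous_image[OF continuous_on_subset[OF
            continuous_on_wcomp[where k=n, OF \<omega> wordsD[OF j]] rattractor_subset_K]
            compact_rattractor[OF shift_in_omega_space[OF \<omega>]]])
  qed (rule hausdorff_wcomp_images_Int_null[OF \<omega>])
  also have "\<dots> \<le> hausdorff_measure h (F \<omega>)"
    by (rule hausdorff_measure_mono) (use wcomp_image_rattractor_shift[OF \<omega>] wordsD in blast)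
  finally show ?thesis .
qed

lemma hausdorff_rattractor_ge_prefix_sum:
  assumes w: "w \<in> \<Omega>" and agree: "\<And>i. i < l \<Longrightarrow> w i = v i"
    and lower: "\<And>u. u \<in> \<Omega> \<Longrightarrow> c \<le> hausdorff_measure h (F u)"
  shows "ennreal (\<Sum>j\<in>words I v l. lip_lower K (wcomp S v j l) powr h) * c \<le> hausdorff_measure h (F w)"
proof -
  have "words I w l = words I v l" by (rule words_cong) (rule agree)
  moreover have "wcomp S w j l = wcomp S v j l" for j by (rule wcomp_cong) (simp_all add: agree)
  ultimately have "ennreal (\<Sum>j\<in>words I v l. lip_lower K (wcomp S v j l) powr h)
      = (\<Sum>j\<in>words I w l. ennreal (lip_lower K (wcomp S w j l) powr h))"
    by (simp add: sum_ennreal)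
  then have "ennreal (\<Sum>j\<in>words I v l. lip_lower K (wcomp S v j l) powr h) * hausdorff_measure h (F (shift l w))
      \<le> hausdorff_measure h (F w)"
    using sum_lip_lower_hausdorff_le[OF w, of l] by simp
  moreover have "c \<le> hausdorff_measure h (F (shift l w))" by (rule lower[OF shift_in_omega_space[OF w]])
  ultimately show ?thesis by (meson mult_left_mono order_trans zero_le)
qed

lemma cylinder_with_large_measure:
  fixes M :: nat
  assumes v: "v \<in> \<Omega>"
    and lim: "filterlim (\<lambda>l. \<Sum>j \<in> words I v l. lip_lower K (wcomp S v j l) powr h) at_top sequentially"
    and c: "0 < c" "\<And>u. u \<in> \<Omega> \<Longrightarrow> ennreal c \<le> hausdorff_measure h (F u)"
    and \<omega>: "\<omega> \<in> \<Omega>"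
  obtains \<omega>' m where "\<omega>' \<in> cylinder N \<omega> n"
    "\<And>w. w \<in> cylinder N \<omega>' m \<Longrightarrow> of_nat M \<le> hausdorff_measure h (F w)"
proof -
  define s where "s l = (\<Sum>j \<in> words I v l. lip_lower K (wcomp S v j l) powr h)" for l
  define \<omega>' where "\<omega>' = splice \<omega> n v"
  have \<omega>': "\<omega>' \<in> \<Omega>" "\<omega>' \<in> cylinder N \<omega> n"
    using splice_in_omega_space[OF \<omega> v] splice_in_cylinder[OF \<omega> v] by (simp_all add: \<omega>'_def)
  obtain j0 where j0: "j0 \<in> words I \<omega>' n" using words_omega_nonempty[OF \<omega>'(1)] by blast
  define a where "a = lip_lower K (wcomp S \<omega>' j0 n) powr h"
  have a: "0 < a" using lip_lower_wcomp_pos[where k=n, OF \<omega>'(1) wordsD[OF j0]] by (simp add: a_def)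
  have "eventually (\<lambda>l. real M / (a * c) \<le> s l) sequentially"
    using lim unfolding filterlim_at_top s_def by blast
  then obtain l where l: "real M / (a * c) \<le> s l" by (auto simp: eventually_sequentially)
  \<comment> \<open>F w contains a copy of F (shift n w), scaled by a at least; the latter is bounded below through
    its first l letters, which are those of v\<close>
  have "of_nat M \<le> hausdorff_measure h (F w)" if w: "w \<in> cylinder N \<omega>' (n + l)" for w
  proof -
    have w\<Omega>: "w \<in> \<Omega>" and agree: "\<And>i. i < n + l \<Longrightarrow> w i = \<omega>' i" using w by (auto simp: cylinder_def)
    have j0_w: "j0 \<in> words I w n" using j0 words_cong[of n w \<omega>' I] agree by simp
    have "wcomp S w j0 n = wcomp S \<omega>' j0 n" by (rule wcomp_cong) (simp_all add: agree)
    then have step1: "ennreal a * hausdorff_measure h (F (shift n w)) \<le> hausdorff_measure h (F w)"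
      using hausdorff_rattractor_ge_piece[OF w\<Omega> j0_w h_nonneg] by (simp add: a_def)
    have "shift n w i = v i" if "i < l" for i
      using agree[of "n + i"] that by (simp add: \<omega>'_def splice_def)
    then have step2: "ennreal (s l) * ennreal c \<le> hausdorff_measure h (F (shift n w))"
      unfolding s_def using hausdorff_rattractor_ge_prefix_sum[OF shift_in_omega_space[OF w\<Omega>] _ c(2)]
      by blast
    have "0 \<le> s l" unfolding s_def by (intro sum_nonneg) simp
    have "of_nat M = ennreal (real M)" by (simp add: ennreal_of_nat_eq_real_of_nat)
    also have "\<dots> \<le> ennreal (a * s l * c)" using l a c(1) by (intro ennreal_leI) (simp add: field_simps)
    also have "\<dots> = ennreal a * (ennreal (s l) * ennreal c)"
      using a c(1) \<open>0 \<le> s l\<close> by (simp add: ennreal_mult mult.assoc)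
    also have "\<dots> \<le> hausdorff_measure h (F w)"
      using mult_left_mono[OF step2, of "ennreal a"] step1 by simp
    finally show ?thesis .
  qed
  with \<omega>'(2) show ?thesis by (rule that)
qed

lemma residual_infinite_rattractors:
  assumes v: "v \<in> \<Omega>"
    and lim: "filterlim (\<lambda>l. \<Sum>j \<in> words I v l. lip_lower K (wcomp S v j l) powr h) at_top sequentially"
    and pos: "(INF u\<in>\<Omega>. hausdorff_measure h (F u)) > 0"
  shows "residual (omega_top N) {\<omega> \<in> \<Omega>. hausdorff_measure h (F \<omega>) = \<infinity>}"
proof -
  obtain x where x: "0 < x" "x < (INF u\<in>\<Omega>. hausdorff_measure h (F u))" using dense[OF pos] by blast
  have "x < top" using x(2) order_less_le_trans top_greatest by blast
  then obtain c where "x = ennreal c" "0 \<le> c" by (cases x rule: ennreal_cases) auto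
  with x have c: "0 < c" "\<And>u. u \<in> \<Omega> \<Longrightarrow> ennreal c \<le> hausdorff_measure h (F u)"
    by (auto dest: INF_lower[of _ _ "\<lambda>u. hausdorff_measure h (F u)"] intro: less_imp_le order_trans)
  define B where "B M = {\<omega> \<in> \<Omega>. hausdorff_measure h (F \<omega>) < of_nat M}" for M :: nat
  show ?thesis
  proof (rule residual_omega_topI[of _ N B])
    show "\<Omega> - {\<omega> \<in> \<Omega>. hausdorff_measure h (F \<omega>) = \<infinity>} \<subseteq> (\<Union>M. B M)"
    proof
      fix \<omega> assume \<omega>: "\<omega> \<in> \<Omega> - {\<omega> \<in> \<Omega>. hausdorff_measure h (F \<omega>) = \<infinity>}"
      then obtain M where "hausdorff_measure h (F \<omega>) < of_nat M"
        using ennreal_Ex_less_of_nat[of "hausdorff_measure h (F \<omega>)"] by (auto simp: less_top)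
      then show "\<omega> \<in> (\<Union>M. B M)" using \<omega> by (auto simp: B_def)
    qed
  next
    fix M \<omega> n assume "\<omega> \<in> \<Omega>"
    obtain \<omega>' m where "\<omega>' \<in> cylinder N \<omega> n"
      "\<And>w. w \<in> cylinder N \<omega>' m \<Longrightarrow> of_nat M \<le> hausdorff_measure h (F w)"
      using cylinder_with_large_measure[OF v lim c \<open>\<omega> \<in> \<Omega>\<close>] by blast
    then show "\<exists>\<omega>'\<in>cylinder N \<omega> n. \<exists>m. cylinder N \<omega>' m \<inter> B M = {}"
      by (fastforce simp: B_def not_less)
  qed blast
qed

end

theorem theorem2p2:
  fixes K :: "'a::metric_space set"
    and N :: nat
    and I :: "nat \<Rightarrow> nat set"
    and S :: "nat \<Rightarrow> nat \<Rightarrow> 'a \<Rightarrow> 'a"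
    and h :: real
  assumes K: "compact K"
    and N: "N \<ge> 1"
    and I: "\<And>l. l \<in> {1..N} \<Longrightarrow> finite (I l) \<and> I l \<noteq> {}"
    and S_maps: "\<And>l i. l \<in> {1..N} \<Longrightarrow> i \<in> I l \<Longrightarrow> S l i ` K \<subseteq> K"
    and S_bilip: "\<And>l i. l \<in> {1..N} \<Longrightarrow> i \<in> I l \<Longrightarrow>
        0 < lip_lower K (S l i) \<and> ereal (lip_lower K (S l i)) \<le> lip_upper K (S l i)
        \<and> lip_upper K (S l i) < 1"
    and h_def: "h = real_of_ereal (INF u \<in> omega_space N. hausdorff_dim (rattractor K I S u))"
    and sep: "\<And>\<omega> l i j. \<omega> \<in> omega_space N \<Longrightarrow> l \<in> {1..N} \<Longrightarrow> i \<in> I l \<Longrightarrow> j \<in> I l \<Longrightarrow> i \<noteq> j \<Longrightarrow>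
        hausdorff_measure h (S l i ` rattractor K I S \<omega> \<inter> S l j ` rattractor K I S \<omega>) = 0"
    and v: "\<exists>v \<in> omega_space N.
        filterlim (\<lambda>l. \<Sum>j \<in> words I v l. lip_lower K (wcomp S v j l) powr h) at_top sequentially"
  shows "((INF u \<in> omega_space N. hausdorff_measure h (rattractor K I S u)) = 0 \<longrightarrow>
            residual (omega_top N) {\<omega> \<in> omega_space N. hausdorff_measure h (rattractor K I S \<omega>) = 0})
       \<and> ((INF u \<in> omega_space N. hausdorff_measure h (rattractor K I S u)) > 0 \<longrightarrow>
            residual (omega_top N) {\<omega> \<in> omega_space N. hausdorff_measure h (rattractor K I S \<omega>) = \<infinity>})"
proof -
  \<comment> \<open>of the definition of h only its nonnegativity is needed\<close>
  have "0 \<le> hausdorff_dim A" for A :: "'a set"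
    unfolding hausdorff_dim_def by (rule Inf_greatest) auto
  then have h_nonneg: "0 \<le> h"
    unfolding h_def by (intro real_of_ereal_pos INF_greatest)
  interpret separated_rifs K N I S h
    using K N I S_maps S_bilip h_nonneg sep by unfold_locales
  obtain w where "w \<in> omega_space N"
    "filterlim (\<lambda>l. \<Sum>j \<in> words I w l. lip_lower K (wcomp S w j l) powr h) at_top sequentially"
    using v by blast
  then show ?thesis
    using residual_null_rattractors[OF h_nonneg] residual_infinite_rattractors by blast
qed

end
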